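(* Let $\mathcal H$ be a family of graphs. The following are equivalent: (i) there is a constant $c=c(\mathcal H)$ such that every connected $\mathcal H$-free graph $G$ has fewer than $c$ vertices $v$ with $\alpha(G[N(v)])\ge 2$; (ii) there is a positive integer $n$ such that $\mathcal H\le \{K_n^*,\ P_n,\ K_{1,n}^*,\ K_{2,n},\ E_2+K_n,\ K_1+nP_3,\ CK_n\}$.
   Context: All graphs are finite, simple, undirected. For graphs $H_1,H_2$, write $H_1\prec H_2$ if $H_2$ contains an induced subgraph isomorphic to $H_1$. A graph $G$ is $\mathcal H$-free if no $H\in\mathcal H$ satisfies $H\prec G$. For families $\mathcal H_1,\mathcal H_2$, write $\mathcal H_1\le\mathcal H_2$ if for every $H_2\in\mathcal H_2$ there is $H_1\in\mathcal H_1$ with $H_1\prec H_2$. $N(v)$ is the neighborhood of $v$, $G[S]$ the induced subgraph, $\alpha$ the independence number (the local independence number of $v$ is $\alpha(G[N(v)])$). $K_n$, $E_n$, $P_n$ are the complete graph, edgeless graph, and path on $n$ vertices; $K_{s,t}$ is the complete bipartite graph; $nG$ is the disjoint union of $n$ copies of $G$; $G_1+G_2$ is the join (disjoint union plus all edges between $V(G_1)$ and $V(G_2)$). $K_{1,n}^*$ is obtained from the star $K_{1,n}$ by attaching a new pendant vertex to each leaf; $K_n^*$ is obtained from $K_n$ by attaching a new pendant vertex to each vertex; $CK_n$ is obtained from two disjoint copies of $K_n$ by adding a perfect matching between them. *)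

theory Defs
  imports Main
begin

text \<open>A graph with vertices of type 'a is a pair (V, E) of a vertex set and a set of
  ordered pairs (each undirected edge appears in both orientations).\<close>
type_synonym 'a graph = "'a set \<times> ('a \<times> 'a) set"

definition verts :: "'a graph \<Rightarrow> 'a set" where "verts G = fst G"
definition edges :: "'a graph \<Rightarrow> ('a \<times> 'a) set" where "edges G = snd G"

definition wf_graph :: "'a graph \<Rightarrow> bool" where
  "wf_graph G \<longleftrightarrow> finite (verts G) \<and> edges G \<subseteq> verts G \<times> verts G
     \<and> sym (edges G) \<and> irrefl (edges G)"

definition induced_sub :: "'a graph \<Rightarrow> 'b graph \<Rightarrow> bool" (infix "\<prec>" 50) where
  "H1 \<prec> H2 \<longleftrightarrow> (\<exists>f. inj_on f (verts H1) \<and> f ` verts H1 \<subseteq> verts H2 \<and>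
     (\<forall>u\<in>verts H1. \<forall>v\<in>verts H1. (u, v) \<in> edges H1 \<longleftrightarrow> (f u, f v) \<in> edges H2))"

definition H_free :: "'a graph set \<Rightarrow> 'b graph \<Rightarrow> bool" where
  "H_free \<H> G \<longleftrightarrow> (\<forall>H\<in>\<H>. \<not> H \<prec> G)"

definition connected_graph :: "'a graph \<Rightarrow> bool" where
  "connected_graph G \<longleftrightarrow> verts G \<noteq> {} \<and>
     (\<forall>u\<in>verts G. \<forall>v\<in>verts G. (u, v) \<in> (edges G)\<^sup>*)"

definition nbhd :: "'a graph \<Rightarrow> 'a \<Rightarrow> 'a set" where
  "nbhd G v = {u. (v, u) \<in> edges G}"

definition induced :: "'a graph \<Rightarrow> 'a set \<Rightarrow> 'a graph" where
  "induced G S = (verts G \<inter> S, edges G \<inter> (S \<times> S))"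

definition independent :: "'a graph \<Rightarrow> 'a set \<Rightarrow> bool" where
  "independent G S \<longleftrightarrow> S \<subseteq> verts G \<and> (\<forall>u\<in>S. \<forall>v\<in>S. (u, v) \<notin> edges G)"

definition alpha :: "'a graph \<Rightarrow> nat" where
  "alpha G = Max {card S | S. independent G S}"

definition complete :: "nat \<Rightarrow> nat graph" where
  "complete n = ({0..<n}, {(i, j). i < n \<and> j < n \<and> i \<noteq> j})"

definition edgeless :: "nat \<Rightarrow> nat graph" where
  "edgeless n = ({0..<n}, {})"

definition path :: "nat \<Rightarrow> nat graph" where
  "path n = ({0..<n}, {(i, j). i < n \<and> j < n \<and> (j = Suc i \<or> i = Suc j)})"

definition complete_bip :: "nat \<Rightarrow> nat \<Rightarrow> (nat + nat) graph" where
  "complete_bip s t = (Inl ` {0..<s} \<union> Inr ` {0..<t},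
     {(Inl i, Inr j) | i j. i < s \<and> j < t} \<union> {(Inr j, Inl i) | i j. i < s \<and> j < t})"

definition join :: "'a graph \<Rightarrow> 'b graph \<Rightarrow> ('a + 'b) graph" where
  "join G1 G2 = (Inl ` verts G1 \<union> Inr ` verts G2,
     {(Inl u, Inl v) | u v. (u, v) \<in> edges G1} \<union> {(Inr u, Inr v) | u v. (u, v) \<in> edges G2}
     \<union> {(Inl u, Inr v) | u v. u \<in> verts G1 \<and> v \<in> verts G2}
     \<union> {(Inr v, Inl u) | u v. u \<in> verts G1 \<and> v \<in> verts G2})"

definition copies :: "nat \<Rightarrow> 'a graph \<Rightarrow> (nat \<times> 'a) graph" where
  "copies n G = ({(i, v). i < n \<and> v \<in> verts G},
     {((i, u), (i, v)) | i u v. i < n \<and> (u, v) \<in> edges G})"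

definition add_pendants :: "'a graph \<Rightarrow> 'a set \<Rightarrow> ('a + 'a) graph" where
  "add_pendants G S = (Inl ` verts G \<union> Inr ` S,
     {(Inl u, Inl v) | u v. (u, v) \<in> edges G}
     \<union> {(Inl v, Inr v) | v. v \<in> S} \<union> {(Inr v, Inl v) | v. v \<in> S})"

definition complete_star :: "nat \<Rightarrow> (nat + nat) graph" where
  "complete_star n = add_pendants (complete n) {0..<n}"

definition star_subdiv :: "nat \<Rightarrow> ((nat + nat) + (nat + nat)) graph" where
  "star_subdiv n = add_pendants (complete_bip 1 n) (Inr ` {0..<n})"

definition CK :: "nat \<Rightarrow> (bool \<times> nat) graph" where
  "CK n = ({(b, i). i < n},
     {((b, i), (b, j)) | b i j. i < n \<and> j < n \<and> i \<noteq> j}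
     \<union> {((b, i), (\<not> b, i)) | b i. i < n})"

text \<open>The order \<le> on families, specialised to the 7-graph family of the theorem
  (whose members have different vertex types).\<close>
definition below_family :: "'a graph set \<Rightarrow> nat \<Rightarrow> bool" where
  "below_family \<H> n \<longleftrightarrow>
     (\<exists>H\<in>\<H>. H \<prec> complete_star n) \<and>
     (\<exists>H\<in>\<H>. H \<prec> path n) \<and>
     (\<exists>H\<in>\<H>. H \<prec> star_subdiv n) \<and>
     (\<exists>H\<in>\<H>. H \<prec> complete_bip 2 n) \<and>
     (\<exists>H\<in>\<H>. H \<prec> join (edgeless 2) (complete n)) \<and>
     (\<exists>H\<in>\<H>. H \<prec> join (complete 1) (copies n (path 3))) \<and>
     (\<exists>H\<in>\<H>. H \<prec> CK n)"

end

(*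
  Call a vertex branching if it has two non-adjacent neighbours, i.e. local independence number at
  least 2. Each of K_n^*, P_n, K_{1,n}^*, K_{2,n}, E_2 + K_n, K_1 + nP_3 and CK_n is connected and
  has at least n - 2 branching vertices; so if connected H-free graphs have fewer than c branching
  vertices, each of these graphs with n = c + 2 contains a member of H.

  Conversely, let G be connected and free of all seven graphs for some n. Breadth-first layers
  from any root number fewer than n, as there is no induced P_n. A large set in a layer on which
  every vertex of the previous layer has few neighbours yields, via parents and Ramsey's theorem,
  a large induced matching between consecutive layers with edgeless sides (cliques would give
  K_n^* or CK_n); such matchings are bounded by induction on the layer, since a vertex of the
  preceding layer with n neighbours on the lower side would centre a K_{1,n}^*. Hence a large
  set of branching vertices has a vertex d adjacent to many of them. Only few of these have a
  neighbour outside the closed neighbourhood of d (otherwise K_{1,n}^*, K_{2,n} or E_2 + K_n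
  appears), so most of them are branching already inside N(d), where they lie in fewer than n
  components (no K_1 + nP_3).
  Recursing into these components, d joins a clique adjacent to everything below it; once this
  clique has n - 1 vertices there are no branching vertices left, as they would give E_2 + K_n.
*)
theory Submission
  imports Defs "HOL-Library.Ramsey"
begin

text \<open>\<open>HOL-Library.Equipollence\<close>, imported by \<open>HOL-Library.Ramsey\<close>, also uses \<open>\<prec>\<close>.\<close>
no_notation lesspoll (infixl \<open>\<prec>\<close> 50)

section \<open>Graphs as vertex and edge sets\<close>

lemma verts_pair [simp]: "verts (V, E) = V"
  by (simp add: verts_def)

lemma edges_pair [simp]: "edges (V, E) = E"
  by (simp add: edges_def)

lemma graph_eq_pair: "G = (verts G, edges G)"
  by (simp add: verts_def edges_def)

lemma induced_subI:
  assumes "inj_on f (verts H)" "f ` verts H \<subseteq> V"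
    and "\<And>u v. u \<in> verts H \<Longrightarrow> v \<in> verts H \<Longrightarrow> (u, v) \<in> edges H \<longleftrightarrow> (f u, f v) \<in> E"
  shows "H \<prec> (V, E)"
  unfolding induced_sub_def using assms by auto

lemma induced_sub_trans:
  assumes "H \<prec> F" "F \<prec> G"
  shows "H \<prec> G"
proof -
  obtain f where f: "inj_on f (verts H)" "f ` verts H \<subseteq> verts F"
    "\<forall>u\<in>verts H. \<forall>v\<in>verts H. (u, v) \<in> edges H \<longleftrightarrow> (f u, f v) \<in> edges F"
    using assms(1) unfolding induced_sub_def by blast
  obtain g where g: "inj_on g (verts F)" "g ` verts F \<subseteq> verts G"
    "\<forall>u\<in>verts F. \<forall>v\<in>verts F. (u, v) \<in> edges F \<longleftrightarrow> (g u, g v) \<in> edges G"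
    using assms(2) unfolding induced_sub_def by blast
  have "inj_on (g \<circ> f) (verts H)"
    using f g by (simp add: comp_inj_on inj_on_subset)
  moreover have "(g \<circ> f) ` verts H \<subseteq> verts G"
    using f g by (auto simp: image_subset_iff)
  moreover have "(u, v) \<in> edges H \<longleftrightarrow> ((g \<circ> f) u, (g \<circ> f) v) \<in> edges G"
    if "u \<in> verts H" "v \<in> verts H" for u v
  proof -
    have "f u \<in> verts F" "f v \<in> verts F" using f(2) that by auto
    then show ?thesis using f(3) g(3) that by simp
  qed
  ultimately show ?thesis
    unfolding induced_sub_def by (intro exI[of _ "g \<circ> f"]) simp
qed

definition complete_on :: "('v \<times> 'v) set \<Rightarrow> 'v set \<Rightarrow> bool" where
  "complete_on E X \<longleftrightarrow> (\<forall>x\<in>X. \<forall>y\<in>X. x \<noteq> y \<longrightarrow> (x, y) \<in> E)"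

definition edgeless_on :: "('v \<times> 'v) set \<Rightarrow> 'v set \<Rightarrow> bool" where
  "edgeless_on E X \<longleftrightarrow> (\<forall>x\<in>X. \<forall>y\<in>X. (x, y) \<notin> E)"

lemma complete_on_subset: "complete_on E X \<Longrightarrow> Y \<subseteq> X \<Longrightarrow> complete_on E Y"
  unfolding complete_on_def by blast

lemma edgeless_on_subset: "edgeless_on E X \<Longrightarrow> Y \<subseteq> X \<Longrightarrow> edgeless_on E Y"
  unfolding edgeless_on_def by blast

definition branching_verts :: "'v graph \<Rightarrow> 'v set" where
  "branching_verts G = {v \<in> verts G. \<exists>a\<in>verts G. \<exists>c\<in>verts G.
     a \<noteq> c \<and> (v, a) \<in> edges G \<and> (v, c) \<in> edges G \<and> (a, c) \<notin> edges G}"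

lemma verts_induced [simp]: "verts (induced G S) = verts G \<inter> S"
  by (simp add: induced_def verts_def)

lemma edges_induced [simp]: "edges (induced G S) = edges G \<inter> (S \<times> S)"
  by (simp add: induced_def edges_def)

lemma local_alpha_ge_2_iff:
  assumes "wf_graph G"
  shows "2 \<le> alpha (induced G (nbhd G v)) \<longleftrightarrow>
    (\<exists>a\<in>verts G. \<exists>c\<in>verts G. a \<noteq> c \<and> (v, a) \<in> edges G \<and> (v, c) \<in> edges G \<and> (a, c) \<notin> edges G)"
    (is "_ \<longleftrightarrow> ?pair")
proof -
  let ?I = "induced G (nbhd G v)"
  have indep_iff: "independent ?I S \<longleftrightarrow> S \<subseteq> verts G \<inter> nbhd G v \<and> (\<forall>x\<in>S. \<forall>y\<in>S. (x, y) \<notin> edges G)"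
    for S
    unfolding independent_def by fastforce
  have "{card S | S. independent ?I S} \<subseteq> card ` Pow (verts G)"
    using indep_iff by blast
  then have fin: "finite {card S | S. independent ?I S}"
    using assms finite_subset unfolding wf_graph_def by blast
  have ne: "{card S | S. independent ?I S} \<noteq> {}"
    using indep_iff[of "{}"] by blast
  have "2 \<le> alpha ?I \<longleftrightarrow> (\<exists>S. independent ?I S \<and> 2 \<le> card S)"
    unfolding alpha_def using Max_ge_iff[OF fin ne] by blast
  also have "\<dots> \<longleftrightarrow> ?pair"
  proof
    assume "\<exists>S. independent ?I S \<and> 2 \<le> card S"
    then obtain S where S: "independent ?I S" "2 \<le> card S" by blast
    then obtain T where "T \<subseteq> S" "card T = 2" by (meson obtain_subset_with_card_n)
    then obtain a c where "a \<in> S" "c \<in> S" "a \<noteq> c" by (auto simp: card_2_iff)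
    then show ?pair using S(1) indep_iff unfolding nbhd_def by blast
  next
    assume ?pair
    then obtain a c where ac: "a \<in> verts G" "c \<in> verts G" "a \<noteq> c"
      "(v, a) \<in> edges G" "(v, c) \<in> edges G" "(a, c) \<notin> edges G"
      by blast
    have "(c, a) \<notin> edges G" "(a, a) \<notin> edges G" "(c, c) \<notin> edges G"
      using ac(6) assms unfolding wf_graph_def sym_def irrefl_def by blast+
    then have "independent ?I {a, c}" using ac indep_iff unfolding nbhd_def by blast
    moreover have "card {a, c} = 2" using ac(3) by simp
    ultimately show "\<exists>S. independent ?I S \<and> 2 \<le> card S" by (metis order_refl)
  qed
  finally show ?thesis .
qed

lemma local_alpha_ge_2_eq_branching_verts:
  assumes "wf_graph G"
  shows "{v \<in> verts G. 2 \<le> alpha (induced G (nbhd G v))} = branching_verts G"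
  unfolding branching_verts_def using local_alpha_ge_2_iff[OF assms] by auto

section \<open>Ramsey bounds\<close>

definition ramsey_bound :: "nat \<Rightarrow> nat \<Rightarrow> nat" where
  "ramsey_bound a b = (a + b) choose a"

lemma ramsey_pairs:
  fixes P :: "'a \<Rightarrow> 'a \<Rightarrow> bool"
  assumes "finite X" "ramsey_bound a b \<le> card X"
  obtains R where "R \<subseteq> X" "card R = a" "\<forall>x\<in>R. \<forall>y\<in>R. x \<noteq> y \<longrightarrow> P x y \<or> P y x"
    | R where "R \<subseteq> X" "card R = b" "\<forall>x\<in>R. \<forall>y\<in>R. \<not> P x y \<or> x = y"
proof -
  let ?N = "ramsey_bound a b"
  have partn: "partn_lst {..<?N} [a, b] 2"
    using ramsey2_full[of 2 a b] by (simp add: ES2_choose ramsey_bound_def)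
  obtain v where v: "inj_on v {..<?N}" "v ` {..<?N} \<subseteq> X"
    by (metis assms card_le_inj card_lessThan finite_lessThan)
  define f where "f e = (if \<exists>x\<in>e. \<exists>y\<in>e. x \<noteq> y \<and> P (v x) (v y) then 0 else Suc 0)" for e
  have "f \<in> nsets {..<?N} 2 \<rightarrow> {..<length [a, b]}"
    by (simp add: f_def)
  then obtain i U where i: "i < 2" and U: "U \<in> nsets {..<?N} ([a, b] ! i)"
    and mono: "f ` nsets U 2 \<subseteq> {i}"
    using partn by (auto simp: partn_lst_def monochromatic_def numeral_2_eq_2)
  have U_sub: "U \<subseteq> {..<?N}" and card_U: "card U = [a, b] ! i"
    using U by (auto simp: nsets_def)
  have card_vU: "card (v ` U) = [a, b] ! i"
    using U_sub card_U card_image inj_on_subset[OF v(1)] by metis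
  have vU: "v ` U \<subseteq> X"
    using U_sub v(2) by blast
  have pair: "f {x, y} = i" if "x \<in> U" "y \<in> U" "x \<noteq> y" for x y
  proof -
    have "{x, y} \<in> nsets U 2" using that by simp
    then show ?thesis using mono by blast
  qed
  show thesis
  proof (cases "i = 0")
    case True
    show thesis
    proof (rule that(1)[OF vU])
      show "card (v ` U) = a" using card_vU True by simp
      show "\<forall>x\<in>v ` U. \<forall>y\<in>v ` U. x \<noteq> y \<longrightarrow> P x y \<or> P y x"
        using pair True by (fastforce simp: f_def split: if_splits)
    qed
  next
    case False
    show thesis
    proof (rule that(2)[OF vU])
      show "card (v ` U) = b" using card_vU False i by (simp add: less_2_cases_iff)
      show "\<forall>x\<in>v ` U. \<forall>y\<in>v ` U. \<not> P x y \<or> x = y"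
        using pair False by (fastforce simp: f_def split: if_splits)
    qed
  qed
qed

lemma ramsey_complete_or_edgeless:
  assumes "sym E" "irrefl E" "finite X" "ramsey_bound a b \<le> card X"
  obtains R where "R \<subseteq> X" "card R = a" "complete_on E R"
    | R where "R \<subseteq> X" "card R = b" "edgeless_on E R"
proof (rule ramsey_pairs[OF assms(3,4), of "\<lambda>x y. (x, y) \<in> E"])
  fix R assume "R \<subseteq> X" "card R = a" "\<forall>x\<in>R. \<forall>y\<in>R. x \<noteq> y \<longrightarrow> (x, y) \<in> E \<or> (y, x) \<in> E"
  then show thesis using that(1) assms(1) unfolding sym_def complete_on_def by blast
next
  fix R assume "R \<subseteq> X" "card R = b" "\<forall>x\<in>R. \<forall>y\<in>R. (x, y) \<notin> E \<or> x = y"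
  then show thesis using that(2) assms(2) unfolding irrefl_def edgeless_on_def by metis
qed

definition outdegree_bound :: "nat \<Rightarrow> nat \<Rightarrow> nat" where
  "outdegree_bound k m = ramsey_bound (Suc k) (ramsey_bound (Suc k) m)"

text \<open>Ramsey's theorem is applied twice, to the arcs pointing upwards and to those pointing downwards
  in the linear order; a set of \<open>k + 1\<close> vertices spanning arcs in one direction only has a vertex of
  out-degree \<open>k\<close> in it.\<close>

lemma bounded_outdegree_independent_subset:
  fixes X :: "'a::linorder set" and Q :: "'a \<Rightarrow> 'a \<Rightarrow> bool"
  assumes "finite X" and outdeg: "\<forall>x\<in>X. card {y\<in>X. Q x y} < k"
    and "outdegree_bound k m \<le> card X"
  obtains Y where "Y \<subseteq> X" "card Y = m" "\<forall>x\<in>Y. \<forall>y\<in>Y. x \<noteq> y \<longrightarrow> \<not> Q x y"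
proof -
  have no_hub: False if R: "R \<subseteq> X" "card R = Suc k" "z \<in> R" "\<forall>y\<in>R - {z}. Q z y" for R z
  proof -
    have "R - {z} \<subseteq> {y\<in>X. Q z y}" using R by auto
    then have "card (R - {z}) \<le> card {y\<in>X. Q z y}" using assms(1) by (intro card_mono) auto
    then show False using outdeg R by fastforce
  qed
  obtain R1 where R1: "R1 \<subseteq> X" "card R1 = ramsey_bound (Suc k) m"
    "\<forall>x\<in>R1. \<forall>y\<in>R1. \<not> (x < y \<and> Q x y) \<or> x = y"
  proof (rule ramsey_pairs[OF assms(1) assms(3)[unfolded outdegree_bound_def],
        where P = "\<lambda>x y. x < y \<and> Q x y"])
    fix R assume R: "R \<subseteq> X" "card R = Suc k"
      "\<forall>x\<in>R. \<forall>y\<in>R. x \<noteq> y \<longrightarrow> x < y \<and> Q x y \<or> y < x \<and> Q y x"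
    have fin: "finite R" and ne: "R \<noteq> {}" using R(2) by (auto intro: card_ge_0_finite)
    have min_less: "Min R < y" if "y \<in> R - {Min R}" for y
      using Min_le[OF fin, of y] that by auto
    have "Q (Min R) y" if "y \<in> R - {Min R}" for y
      using R(3)[rule_format, of "Min R" y] min_less[OF that] that Min_in[OF fin ne] by auto
    then show thesis using no_hub[OF R(1,2) Min_in[OF fin ne]] by blast
  qed
  obtain R2 where R2: "R2 \<subseteq> R1" "card R2 = m" "\<forall>x\<in>R2. \<forall>y\<in>R2. \<not> (y < x \<and> Q x y) \<or> x = y"
  proof (rule ramsey_pairs[of R1 "Suc k" m "\<lambda>x y. y < x \<and> Q x y"])
    show "finite R1" using R1(1) assms(1) by (rule finite_subset)
    show "ramsey_bound (Suc k) m \<le> card R1" using R1(2) by simp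
    fix R assume R: "R \<subseteq> R1" "card R = Suc k"
      "\<forall>x\<in>R. \<forall>y\<in>R. x \<noteq> y \<longrightarrow> y < x \<and> Q x y \<or> x < y \<and> Q y x"
    have fin: "finite R" and ne: "R \<noteq> {}" using R(2) by (auto intro: card_ge_0_finite)
    have less_max: "y < Max R" if "y \<in> R - {Max R}" for y
      using Max_ge[OF fin, of y] that by auto
    have "Q (Max R) y" if "y \<in> R - {Max R}" for y
      using R(3)[rule_format, of "Max R" y] less_max[OF that] that Max_in[OF fin ne] by auto
    then show thesis using no_hub[of R "Max R"] R(1,2) R1(1) Max_in[OF fin ne] by blast
  qed
  show thesis
  proof (rule that[of R2])
    show "R2 \<subseteq> X" "card R2 = m" using R1 R2 by auto
    show "\<forall>x\<in>R2. \<forall>y\<in>R2. x \<noteq> y \<longrightarrow> \<not> Q x y"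
      using R1(3) R2 by (metis linorder_neqE subsetD)
  qed
qed

section \<open>Recognising the seven forbidden graphs\<close>

locale simple_graph =
  fixes V :: "'v set" and E :: "('v \<times> 'v) set"
  assumes finite_V: "finite V" and edges_subset: "E \<subseteq> V \<times> V"
    and sym_E: "sym E" and irrefl_E: "irrefl E"
begin

lemma edge_sym: "(x, y) \<in> E \<longleftrightarrow> (y, x) \<in> E"
  using sym_E unfolding sym_def by blast

lemma no_loop [simp]: "(x, x) \<notin> E"
  using irrefl_E unfolding irrefl_def by blast

lemma finite_subset_V: "X \<subseteq> V \<Longrightarrow> finite X"
  using finite_V finite_subset by blast

end

lemma simple_graph_iff_wf_graph: "simple_graph (verts G) (edges G) \<longleftrightarrow> wf_graph G"
  unfolding simple_graph_def wf_graph_def by blast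

lemma obtain_indexing:
  assumes "finite X" "card X = m"
  obtains h where "inj_on h {..<m}" "h ` {..<m} = X"
  using ex_bij_betw_nat_finite[OF assms(1)] assms(2) by (auto simp: bij_betw_def atLeast0LessThan)

lemma verts_complete_star: "verts (complete_star m) = Inl ` {..<m} \<union> Inr ` {..<m}"
  by (simp add: complete_star_def add_pendants_def complete_def atLeast0LessThan)

lemma edges_complete_star:
  "(Inl i, Inl j) \<in> edges (complete_star m) \<longleftrightarrow> i < m \<and> j < m \<and> i \<noteq> j"
  "(Inl i, Inr j) \<in> edges (complete_star m) \<longleftrightarrow> i = j \<and> j < m"
  "(Inr i, Inl j) \<in> edges (complete_star m) \<longleftrightarrow> i = j \<and> j < m"
  "(Inr i, Inr j) \<notin> edges (complete_star m)"
  by (auto simp: complete_star_def add_pendants_def complete_def)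

lemma verts_CK: "verts (CK m) = {(b, i). i < m}"
  by (simp add: CK_def)

lemma edges_CK:
  "((b, i), (b', j)) \<in> edges (CK m) \<longleftrightarrow> i < m \<and> j < m \<and> (b' = b \<and> i \<noteq> j \<or> b' = (\<not> b) \<and> i = j)"
  by (auto simp: CK_def)

lemma verts_star_subdiv:
  "verts (star_subdiv m) = {Inl (Inl 0)} \<union> Inl ` Inr ` {..<m} \<union> Inr ` Inr ` {..<m}"
  by (auto simp: star_subdiv_def add_pendants_def complete_bip_def)

lemma edges_star_subdiv:
  "(Inl (Inl a), Inl (Inr j)) \<in> edges (star_subdiv m) \<longleftrightarrow> a = 0 \<and> j < m"
  "(Inl (Inr j), Inl (Inl a)) \<in> edges (star_subdiv m) \<longleftrightarrow> a = 0 \<and> j < m"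
  "(Inl (Inl a), Inl (Inl b)) \<notin> edges (star_subdiv m)"
  "(Inl (Inr i), Inl (Inr j)) \<notin> edges (star_subdiv m)"
  "(Inl (Inr i), Inr (Inr j)) \<in> edges (star_subdiv m) \<longleftrightarrow> i = j \<and> j < m"
  "(Inr (Inr j), Inl (Inr i)) \<in> edges (star_subdiv m) \<longleftrightarrow> i = j \<and> j < m"
  "(Inl (Inl a), Inr x) \<notin> edges (star_subdiv m)"
  "(Inr x, Inl (Inl a)) \<notin> edges (star_subdiv m)"
  "(Inr x, Inr y) \<notin> edges (star_subdiv m)"
  by (auto simp: star_subdiv_def add_pendants_def complete_bip_def)

lemma verts_complete_bip_2: "verts (complete_bip 2 m) = Inl ` {..<2} \<union> Inr ` {..<m}"
  by (simp add: complete_bip_def atLeast0LessThan)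

lemma edges_complete_bip_2:
  "(Inl i, Inr j) \<in> edges (complete_bip 2 m) \<longleftrightarrow> i < 2 \<and> j < m"
  "(Inr j, Inl i) \<in> edges (complete_bip 2 m) \<longleftrightarrow> i < 2 \<and> j < m"
  "(Inl i, Inl i') \<notin> edges (complete_bip 2 m)"
  "(Inr j, Inr j') \<notin> edges (complete_bip 2 m)"
  by (auto simp: complete_bip_def)

lemma verts_join_edgeless_complete:
  "verts (join (edgeless 2) (complete m)) = Inl ` {..<2} \<union> Inr ` {..<m}"
  by (simp add: join_def edgeless_def complete_def atLeast0LessThan)

lemma edges_join_edgeless_complete:
  "(Inl i, Inr j) \<in> edges (join (edgeless 2) (complete m)) \<longleftrightarrow> i < 2 \<and> j < m"
  "(Inr j, Inl i) \<in> edges (join (edgeless 2) (complete m)) \<longleftrightarrow> i < 2 \<and> j < m"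
  "(Inl i, Inl i') \<notin> edges (join (edgeless 2) (complete m))"
  "(Inr j, Inr j') \<in> edges (join (edgeless 2) (complete m)) \<longleftrightarrow> j < m \<and> j' < m \<and> j \<noteq> j'"
  by (auto simp: join_def edgeless_def complete_def)

lemma verts_path: "verts (path m) = {..<m}"
  by (simp add: path_def atLeast0LessThan)

lemma edges_path: "(i, j) \<in> edges (path m) \<longleftrightarrow> i < m \<and> j < m \<and> (j = Suc i \<or> i = Suc j)"
  by (simp add: path_def)

lemma verts_join_complete_copies:
  "verts (join (complete 1) (copies m (path 3))) = {Inl 0} \<union> Inr ` ({..<m} \<times> {..<3})"
  by (auto simp: join_def complete_def copies_def path_def)

lemma edges_join_complete_copies:
  "(Inl a, Inl b) \<notin> edges (join (complete 1) (copies m (path 3)))"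
  "(Inl a, Inr (i, j)) \<in> edges (join (complete 1) (copies m (path 3))) \<longleftrightarrow> a = 0 \<and> i < m \<and> j < 3"
  "(Inr (i, j), Inl a) \<in> edges (join (complete 1) (copies m (path 3))) \<longleftrightarrow> a = 0 \<and> i < m \<and> j < 3"
  "(Inr (i, j), Inr (i', j')) \<in> edges (join (complete 1) (copies m (path 3))) \<longleftrightarrow>
     i = i' \<and> i < m \<and> j < 3 \<and> j' < 3 \<and> (j' = Suc j \<or> j = Suc j')"
  by (auto simp: join_def complete_def copies_def path_def)

lemma path_induced_sub_path: "a \<le> b \<Longrightarrow> path a \<prec> path b"
  unfolding induced_sub_def by (intro exI[of _ id]) (auto simp: verts_path edges_path)

context simple_graph
begin

lemma complete_on_image_iff:
  "complete_on E (h ` {..<m}) \<Longrightarrow> inj_on h {..<m} \<Longrightarrow> i < m \<Longrightarrow> j < m \<Longrightarrow>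
    (h i, h j) \<in> E \<longleftrightarrow> i \<noteq> j"
  by (auto simp: inj_on_def complete_on_def)

lemma edgeless_on_imageD:
  "edgeless_on E (h ` {..<m}) \<Longrightarrow> i < m \<Longrightarrow> j < m \<Longrightarrow> (h i, h j) \<notin> E"
  by (auto simp: edgeless_on_def)

lemma disjoint_imagesD:
  "h ` {..<m} \<inter> h' ` {..<m} = {} \<Longrightarrow> i < m \<Longrightarrow> j < m \<Longrightarrow> h i \<noteq> h' j"
  by auto

lemma induced_sub_complete_starI:
  assumes inj: "inj_on h {..<m}" "inj_on h' {..<m}"
    and in_V: "h ` {..<m} \<subseteq> V" "h' ` {..<m} \<subseteq> V" and disj: "h ` {..<m} \<inter> h' ` {..<m} = {}"
    and matching: "\<forall>i<m. \<forall>j<m. (h i, h' j) \<in> E \<longleftrightarrow> i = j"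
    and "complete_on E (h ` {..<m})" "edgeless_on E (h' ` {..<m})"
  shows "complete_star m \<prec> (V, E)"
proof (rule induced_subI[of "case_sum h h'"])
  show "inj_on (case_sum h h') (verts (complete_star m))"
    using inj disjoint_imagesD[OF disj] unfolding verts_complete_star inj_on_def by (auto; metis)
  show "case_sum h h' ` verts (complete_star m) \<subseteq> V"
    using in_V unfolding verts_complete_star by auto
  fix u v assume "u \<in> verts (complete_star m)" "v \<in> verts (complete_star m)"
  then show "(u, v) \<in> edges (complete_star m) \<longleftrightarrow> (case_sum h h' u, case_sum h h' v) \<in> E"
    unfolding verts_complete_star using matching edge_sym complete_on_image_iff[OF assms(7) inj(1)]
      edgeless_on_imageD[OF assms(8)]
    by (auto simp: edges_complete_star)
qed

lemma induced_sub_CKI: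
  assumes inj: "inj_on h {..<m}" "inj_on h' {..<m}"
    and in_V: "h ` {..<m} \<subseteq> V" "h' ` {..<m} \<subseteq> V" and disj: "h ` {..<m} \<inter> h' ` {..<m} = {}"
    and matching: "\<forall>i<m. \<forall>j<m. (h i, h' j) \<in> E \<longleftrightarrow> i = j"
    and "complete_on E (h ` {..<m})" "complete_on E (h' ` {..<m})"
  shows "CK m \<prec> (V, E)"
proof (rule induced_subI[of "\<lambda>(b, i). if b then h i else h' i"])
  show "inj_on (\<lambda>(b, i). if b then h i else h' i) (verts (CK m))"
    using inj disjoint_imagesD[OF disj] unfolding verts_CK inj_on_def by (auto; metis)
  show "(\<lambda>(b, i). if b then h i else h' i) ` verts (CK m) \<subseteq> V"
    using in_V unfolding verts_CK by (auto simp: image_subset_iff)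
  fix u v assume "u \<in> verts (CK m)" "v \<in> verts (CK m)"
  then obtain b i b' j where uv: "u = (b, i)" "v = (b', j)" "i < m" "j < m"
    unfolding verts_CK by auto
  show "(u, v) \<in> edges (CK m) \<longleftrightarrow>
      ((\<lambda>(b, i). if b then h i else h' i) u, (\<lambda>(b, i). if b then h i else h' i) v) \<in> E"
    unfolding uv using uv(3,4) matching edge_sym complete_on_image_iff[OF assms(7) inj(1)]
      complete_on_image_iff[OF assms(8) inj(2)]
    by (cases b; cases b') (auto simp: edges_CK)
qed

lemma induced_sub_star_subdivI:
  assumes inj: "inj_on h {..<m}" "inj_on h' {..<m}"
    and in_V: "c \<in> V" "h ` {..<m} \<subseteq> V" "h' ` {..<m} \<subseteq> V"
    and disj: "h ` {..<m} \<inter> h' ` {..<m} = {}" "c \<notin> h ` {..<m}" "c \<notin> h' ` {..<m}"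
    and matching: "\<forall>i<m. \<forall>j<m. (h i, h' j) \<in> E \<longleftrightarrow> i = j"
    and "edgeless_on E (h ` {..<m})" "edgeless_on E (h' ` {..<m})"
    and centre: "\<forall>i<m. (c, h i) \<in> E \<and> (c, h' i) \<notin> E"
  shows "star_subdiv m \<prec> (V, E)"
proof -
  define f where "f u = (case u of Inl (Inl _) \<Rightarrow> c | Inl (Inr j) \<Rightarrow> h j
    | Inr (Inr j) \<Rightarrow> h' j | Inr (Inl _) \<Rightarrow> c)" for u :: "(nat + nat) + (nat + nat)"
  have f_simps: "f (Inl (Inl a)) = c" "f (Inl (Inr j)) = h j" "f (Inr (Inr j)) = h' j" for a j
    by (simp_all add: f_def)
  show ?thesis
  proof (rule induced_subI[of f])
    show "inj_on f (verts (star_subdiv m))"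
      using inj disjoint_imagesD[OF disj(1)] disj(2,3) unfolding verts_star_subdiv inj_on_def
      by (auto simp: f_simps; metis)
    show "f ` verts (star_subdiv m) \<subseteq> V"
      using in_V unfolding verts_star_subdiv by (auto simp: f_simps)
    fix u v assume "u \<in> verts (star_subdiv m)" "v \<in> verts (star_subdiv m)"
    then show "(u, v) \<in> edges (star_subdiv m) \<longleftrightarrow> (f u, f v) \<in> E"
      unfolding verts_star_subdiv using matching centre edge_sym edgeless_on_imageD[OF assms(10)]
        edgeless_on_imageD[OF assms(11)]
      by (auto simp: f_simps edges_star_subdiv)
  qed
qed

lemma induced_sub_complete_bip_2I:
  assumes inj: "inj_on h {..<m}"
    and in_V: "c \<in> V" "q \<in> V" "h ` {..<m} \<subseteq> V"
    and disj: "c \<notin> h ` {..<m}" "q \<notin> h ` {..<m}" "c \<noteq> q"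
    and "(c, q) \<notin> E" and apexes: "\<forall>i<m. (c, h i) \<in> E \<and> (q, h i) \<in> E"
    and "edgeless_on E (h ` {..<m})"
  shows "complete_bip 2 m \<prec> (V, E)"
proof (rule induced_subI[of "case_sum (\<lambda>i. if i = 0 then c else q) h"])
  show "inj_on (case_sum (\<lambda>i. if i = 0 then c else q) h) (verts (complete_bip 2 m))"
    using inj disj unfolding verts_complete_bip_2 inj_on_def by (auto simp: less_2_cases_iff)
  show "case_sum (\<lambda>i. if i = 0 then c else q) h ` verts (complete_bip 2 m) \<subseteq> V"
    using in_V unfolding verts_complete_bip_2 by auto
  fix u v assume "u \<in> verts (complete_bip 2 m)" "v \<in> verts (complete_bip 2 m)"
  then show "(u, v) \<in> edges (complete_bip 2 m) \<longleftrightarrow>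
      (case_sum (\<lambda>i. if i = 0 then c else q) h u, case_sum (\<lambda>i. if i = 0 then c else q) h v) \<in> E"
    unfolding verts_complete_bip_2 using assms(8,9) edge_sym edgeless_on_imageD[OF assms(10)]
    by (auto simp: edges_complete_bip_2 less_2_cases_iff)
qed

lemma induced_sub_join_edgeless_completeI:
  assumes inj: "inj_on h {..<m}"
    and in_V: "c \<in> V" "q \<in> V" "h ` {..<m} \<subseteq> V"
    and disj: "c \<notin> h ` {..<m}" "q \<notin> h ` {..<m}" "c \<noteq> q"
    and "(c, q) \<notin> E" and apexes: "\<forall>i<m. (c, h i) \<in> E \<and> (q, h i) \<in> E"
    and "complete_on E (h ` {..<m})"
  shows "join (edgeless 2) (complete m) \<prec> (V, E)"
proof (rule induced_subI[of "case_sum (\<lambda>i. if i = 0 then c else q) h"])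
  show "inj_on (case_sum (\<lambda>i. if i = 0 then c else q) h) (verts (join (edgeless 2) (complete m)))"
    using inj disj unfolding verts_join_edgeless_complete inj_on_def by (auto simp: less_2_cases_iff)
  show "case_sum (\<lambda>i. if i = 0 then c else q) h ` verts (join (edgeless 2) (complete m)) \<subseteq> V"
    using in_V unfolding verts_join_edgeless_complete by auto
  fix u v assume "u \<in> verts (join (edgeless 2) (complete m))" "v \<in> verts (join (edgeless 2) (complete m))"
  then show "(u, v) \<in> edges (join (edgeless 2) (complete m)) \<longleftrightarrow>
      (case_sum (\<lambda>i. if i = 0 then c else q) h u, case_sum (\<lambda>i. if i = 0 then c else q) h v) \<in> E"
    unfolding verts_join_edgeless_complete using assms(8,9) edge_sym complete_on_image_iff[OF assms(10) inj]
    by (auto simp: edges_join_edgeless_complete less_2_cases_iff)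
qed

lemma induced_sub_pathI:
  assumes "inj_on f {..<m}" "f ` {..<m} \<subseteq> V"
    and "\<forall>i<m. \<forall>j<m. (f i, f j) \<in> E \<longleftrightarrow> j = Suc i \<or> i = Suc j"
  shows "path m \<prec> (V, E)"
  using assms by (intro induced_subI[of f]) (auto simp: verts_path edges_path)

lemma induced_sub_join_complete_copiesI:
  fixes T :: "nat \<Rightarrow> nat \<Rightarrow> 'v"
  assumes in_V: "d \<in> V" "\<forall>i<m. \<forall>j<3. T i j \<in> V"
    and apex: "\<forall>i<m. \<forall>j<3. (d, T i j) \<in> E"
    and paths: "\<forall>i<m. \<forall>j<3. \<forall>j'<3. (T i j, T i j') \<in> E \<longleftrightarrow> j' = Suc j \<or> j = Suc j'"
    and inj: "\<forall>i<m. \<forall>j<3. \<forall>j'<3. T i j = T i j' \<longrightarrow> j = j'"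
    and separate: "\<forall>i<m. \<forall>i'<m. i \<noteq> i' \<longrightarrow> (\<forall>j<3. \<forall>j'<3. T i j \<noteq> T i' j' \<and> (T i j, T i' j') \<notin> E)"
  shows "join (complete 1) (copies m (path 3)) \<prec> (V, E)"
proof -
  define f where "f u = (case u of Inl _ \<Rightarrow> d | Inr (i, j) \<Rightarrow> T i j)" for u :: "nat + nat \<times> nat"
  have f_simps: "f (Inl a) = d" "f (Inr (i, j)) = T i j" for a i j
    by (simp_all add: f_def)
  have apex': "(T i j, d) \<in> E" "T i j \<noteq> d" "d \<noteq> T i j" if "i < m" "j < 3" for i j
    using apex that edge_sym no_loop by metis+
  have edge_iff: "(T i j, T i' j') \<in> E \<longleftrightarrow> i = i' \<and> (j' = Suc j \<or> j = Suc j')"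
    if "i < m" "j < 3" "i' < m" "j' < 3" for i j i' j'
    using paths separate that by (cases "i = i'") auto
  have T_eq_iff: "T i j = T i' j' \<longleftrightarrow> i = i' \<and> j = j'" if "i < m" "j < 3" "i' < m" "j' < 3" for i j i' j'
    using inj separate that by (cases "i = i'") auto
  show ?thesis
  proof (rule induced_subI[of f])
    show "inj_on f (verts (join (complete 1) (copies m (path 3))))"
      unfolding inj_on_def verts_join_complete_copies by (auto simp: f_simps apex' T_eq_iff)
    show "f ` verts (join (complete 1) (copies m (path 3))) \<subseteq> V"
      unfolding verts_join_complete_copies using in_V by (auto simp: f_simps)
    fix u v assume "u \<in> verts (join (complete 1) (copies m (path 3)))"
      "v \<in> verts (join (complete 1) (copies m (path 3)))"
    then show "(u, v) \<in> edges (join (complete 1) (copies m (path 3))) \<longleftrightarrow> (f u, f v) \<in> E"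
      unfolding verts_join_complete_copies using apex edges_join_complete_copies[unfolded One_nat_def]
      by (auto simp: f_simps apex' edge_iff)
  qed
qed

end

definition perfect_matching_between :: "('v \<times> 'v) set \<Rightarrow> 'v set \<Rightarrow> 'v set \<Rightarrow> bool" where
  "perfect_matching_between E A B \<longleftrightarrow>
     (\<forall>a\<in>A. \<exists>!b. b \<in> B \<and> (a, b) \<in> E) \<and> (\<forall>b\<in>B. \<exists>!a. a \<in> A \<and> (a, b) \<in> E)"

lemma matching_fun_inj_on:
  assumes "\<forall>x\<in>X. \<forall>y\<in>X. (p x, y) \<in> E \<longleftrightarrow> x = y"
  shows "inj_on p X"
  using assms unfolding inj_on_def by metis

context simple_graph
begin

lemma perfect_matching_between_sym:
  "perfect_matching_between E A B \<Longrightarrow> perfect_matching_between E B A"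
  unfolding perfect_matching_between_def using edge_sym by auto

lemma perfect_matching_between_image:
  assumes "\<forall>x\<in>X. \<forall>y\<in>X. (p x, y) \<in> E \<longleftrightarrow> x = y"
  shows "perfect_matching_between E X (p ` X)"
  unfolding perfect_matching_between_def
proof (intro conjI ballI)
  fix a assume "a \<in> X"
  then show "\<exists>!b. b \<in> p ` X \<and> (a, b) \<in> E"
    using assms edge_sym by (intro ex1I[of _ "p a"]) auto
next
  fix b assume "b \<in> p ` X"
  then obtain y where "y \<in> X" "b = p y" by blast
  then show "\<exists>!a. a \<in> X \<and> (a, b) \<in> E"
    using assms edge_sym by (intro ex1I[of _ y]) auto
qed

lemma obtain_matched_indexing:
  assumes matching: "perfect_matching_between E A B"
    and "A' \<subseteq> A" "finite A'" "m \<le> card A'"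
  obtains h h' where "inj_on h {..<m}" "inj_on h' {..<m}" "h ` {..<m} \<subseteq> A'" "h' ` {..<m} \<subseteq> B"
    "\<forall>i<m. \<forall>j<m. (h i, h' j) \<in> E \<longleftrightarrow> i = j"
proof -
  obtain A'' where A'': "A'' \<subseteq> A'" "card A'' = m"
    using obtain_subset_with_card_n[OF assms(4)] by blast
  obtain h where h: "inj_on h {..<m}" "h ` {..<m} = A''"
    using obtain_indexing[OF finite_subset[OF A''(1) assms(3)] A''(2)] .
  have hA: "h i \<in> A" if "i < m" for i
    using h(2) A''(1) assms(2) that by blast
  define h' where "h' i = (THE b. b \<in> B \<and> (h i, b) \<in> E)" for i
  have h': "h' i \<in> B \<and> (h i, h' i) \<in> E" if "i < m" for i
  proof -
    have "\<exists>!b. b \<in> B \<and> (h i, b) \<in> E"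
      using matching hA[OF that] unfolding perfect_matching_between_def by blast
    then show ?thesis unfolding h'_def by (rule theI')
  qed
  have match: "(h i, h' j) \<in> E \<longleftrightarrow> i = j" if "i < m" "j < m" for i j
  proof
    assume "(h i, h' j) \<in> E"
    moreover have "(h j, h' j) \<in> E" "h' j \<in> B" using h' that(2) by blast+
    ultimately have "h i = h j"
      using matching hA that unfolding perfect_matching_between_def by blast
    then show "i = j" using inj_onD[OF h(1)] that by simp
  qed (use h' that in blast)
  show thesis
  proof (rule that[OF h(1)])
    show "inj_on h' {..<m}"
    proof (rule inj_onI)
      fix i j assume "i \<in> {..<m}" "j \<in> {..<m}" "h' i = h' j"
      then show "i = j" using match h' by (metis lessThan_iff)
    qed
    show "h ` {..<m} \<subseteq> A'" "h' ` {..<m} \<subseteq> B"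
      using h(2) A''(1) h' by auto
    show "\<forall>i<m. \<forall>j<m. (h i, h' j) \<in> E \<longleftrightarrow> i = j"
      using match by blast
  qed
qed

lemma perfect_matching_between_card:
  assumes "perfect_matching_between E A B" "A \<subseteq> V" "B \<subseteq> V"
  shows "card A = card B"
proof -
  have le: "card X \<le> card Y"
    if pm: "perfect_matching_between E X Y" and XV: "X \<subseteq> V" and YV: "Y \<subseteq> V" for X Y
  proof -
    obtain h h' where "inj_on h' {..<card X}" "h' ` {..<card X} \<subseteq> Y"
      using obtain_matched_indexing[OF pm order_refl finite_subset_V[OF XV] order_refl] by metis
    then show ?thesis
      using card_inj_on_le[of h' "{..<card X}" Y] finite_subset_V[OF YV] by auto
  qed
  show ?thesis
    using le[OF assms] le[OF perfect_matching_between_sym[OF assms(1)] assms(3,2)] by simp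
qed

lemma obtain_homogeneous:
  assumes "finite X" "ramsey_bound m m \<le> card X"
  obtains R where "R \<subseteq> X" "card R = m" "complete_on E R \<or> edgeless_on E R"
proof (rule ramsey_complete_or_edgeless[OF sym_E irrefl_E assms])
qed (use that in blast)+

end

locale forbidden_free = simple_graph V E for V :: "'v::linorder set" and E +
  fixes n :: nat
  assumes n_pos: "0 < n"
    and no_complete_star: "\<not> complete_star n \<prec> (V, E)"
    and no_path: "\<not> path n \<prec> (V, E)"
    and no_star_subdiv: "\<not> star_subdiv n \<prec> (V, E)"
    and no_complete_bip_2: "\<not> complete_bip 2 n \<prec> (V, E)"
    and no_join_edgeless_complete: "\<not> join (edgeless 2) (complete n) \<prec> (V, E)"
    and no_join_complete_copies: "\<not> join (complete 1) (copies n (path 3)) \<prec> (V, E)"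
    and no_CK: "\<not> CK n \<prec> (V, E)"
begin

lemma complete_star_free:
  assumes "A \<subseteq> V" "B \<subseteq> V" "A \<inter> B = {}" "perfect_matching_between E A B"
    and "complete_on E A" "edgeless_on E B"
  shows "card A < n"
proof (rule ccontr)
  assume "\<not> card A < n"
  then have "n \<le> card A" by simp
  then obtain h h' where h: "inj_on h {..<n}" "inj_on h' {..<n}" "h ` {..<n} \<subseteq> A" "h' ` {..<n} \<subseteq> B"
    "\<forall>i<n. \<forall>j<n. (h i, h' j) \<in> E \<longleftrightarrow> i = j"
    by (rule obtain_matched_indexing[OF assms(4) order_refl finite_subset_V[OF assms(1)]])
  have "h ` {..<n} \<subseteq> V" using h(3) assms(1) by blast
  moreover have "h' ` {..<n} \<subseteq> V" using h(4) assms(2) by blast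
  moreover have "h ` {..<n} \<inter> h' ` {..<n} = {}" using h(3,4) assms(3) by blast
  moreover have "complete_on E (h ` {..<n})" by (rule complete_on_subset[OF assms(5) h(3)])
  moreover have "edgeless_on E (h' ` {..<n})" by (rule edgeless_on_subset[OF assms(6) h(4)])
  ultimately have "complete_star n \<prec> (V, E)"
    by (rule induced_sub_complete_starI[OF h(1,2) _ _ _ h(5)])
  with no_complete_star show False ..
qed

lemma CK_free:
  assumes "A \<subseteq> V" "B \<subseteq> V" "A \<inter> B = {}" "perfect_matching_between E A B"
    and "complete_on E A" "complete_on E B"
  shows "card A < n"
proof (rule ccontr)
  assume "\<not> card A < n"
  then have "n \<le> card A" by simp
  then obtain h h' where h: "inj_on h {..<n}" "inj_on h' {..<n}" "h ` {..<n} \<subseteq> A" "h' ` {..<n} \<subseteq> B"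
    "\<forall>i<n. \<forall>j<n. (h i, h' j) \<in> E \<longleftrightarrow> i = j"
    by (rule obtain_matched_indexing[OF assms(4) order_refl finite_subset_V[OF assms(1)]])
  have "h ` {..<n} \<subseteq> V" using h(3) assms(1) by blast
  moreover have "h' ` {..<n} \<subseteq> V" using h(4) assms(2) by blast
  moreover have "h ` {..<n} \<inter> h' ` {..<n} = {}" using h(3,4) assms(3) by blast
  moreover have "complete_on E (h ` {..<n})" by (rule complete_on_subset[OF assms(5) h(3)])
  moreover have "complete_on E (h' ` {..<n})" by (rule complete_on_subset[OF assms(6) h(4)])
  ultimately have "CK n \<prec> (V, E)"
    by (rule induced_sub_CKI[OF h(1,2) _ _ _ h(5)])
  with no_CK show False ..
qed

lemma matched_homogeneous_edgeless:
  assumes "A \<subseteq> V" "B \<subseteq> V" "A \<inter> B = {}" "perfect_matching_between E A B" "n \<le> card A"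
    and homogeneous: "complete_on E A \<or> edgeless_on E A" "complete_on E B \<or> edgeless_on E B"
  shows "edgeless_on E A \<and> edgeless_on E B"
proof -
  have not_complete_A: "\<not> complete_on E A"
  proof
    assume complete_A: "complete_on E A"
    from homogeneous(2) have "card A < n"
    proof
      assume "complete_on E B"
      then show ?thesis by (rule CK_free[OF assms(1-4) complete_A])
    next
      assume "edgeless_on E B"
      then show ?thesis by (rule complete_star_free[OF assms(1-4) complete_A])
    qed
    with assms(5) show False by simp
  qed
  have not_complete_B: "\<not> complete_on E B"
  proof
    assume "complete_on E B"
    moreover have "edgeless_on E A" using homogeneous(1) not_complete_A by blast
    moreover have "B \<inter> A = {}" using assms(3) by blast
    ultimately have "card B < n"
      using complete_star_free[OF assms(2,1) _ perfect_matching_between_sym[OF assms(4)]] by blast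
    moreover have "card B = card A"
      using perfect_matching_between_card[OF assms(4,1,2)] by simp
    ultimately show False using assms(5) by simp
  qed
  show ?thesis using homogeneous not_complete_A not_complete_B by blast
qed

lemma star_subdiv_free:
  assumes "c \<in> V" "A \<subseteq> V" "B \<subseteq> V" "c \<notin> A" "c \<notin> B" "A \<inter> B = {}"
    and "perfect_matching_between E A B" "edgeless_on E A" "edgeless_on E B"
    and "\<forall>b\<in>B. (c, b) \<notin> E"
  shows "card {a\<in>A. (c, a) \<in> E} < n"
proof (rule ccontr)
  let ?A = "{a\<in>A. (c, a) \<in> E}"
  assume "\<not> card ?A < n"
  then have le: "n \<le> card ?A" by simp
  have sub: "?A \<subseteq> A" and fin: "finite ?A"
    using finite_subset_V assms(2) by auto
  obtain h h' where h: "inj_on h {..<n}" "inj_on h' {..<n}" "h ` {..<n} \<subseteq> ?A"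
    "h' ` {..<n} \<subseteq> B" "\<forall>i<n. \<forall>j<n. (h i, h' j) \<in> E \<longleftrightarrow> i = j"
    by (rule obtain_matched_indexing[OF assms(7) sub fin le])
  have "h ` {..<n} \<subseteq> V" "h' ` {..<n} \<subseteq> V" "h ` {..<n} \<inter> h' ` {..<n} = {}"
    "c \<notin> h ` {..<n}" "c \<notin> h' ` {..<n}"
    using h(3,4) assms(2-6) by blast+
  moreover have "edgeless_on E (h ` {..<n})"
    using h(3) by (intro edgeless_on_subset[OF assms(8)]) blast
  moreover have "edgeless_on E (h' ` {..<n})"
    using h(4) by (rule edgeless_on_subset[OF assms(9)])
  moreover have "\<forall>i<n. (c, h i) \<in> E \<and> (c, h' i) \<notin> E"
    using h(3,4) assms(10) by (simp add: image_subset_iff)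
  ultimately have "star_subdiv n \<prec> (V, E)"
    by (rule induced_sub_star_subdivI[OF h(1,2) assms(1) _ _ _ _ _ h(5)])
  with no_star_subdiv show False ..
qed

end

section \<open>Breadth-first layers\<close>

context simple_graph
begin

fun bfs_ball :: "'v set \<Rightarrow> 'v \<Rightarrow> nat \<Rightarrow> 'v set" where
  "bfs_ball W r 0 = {r}"
| "bfs_ball W r (Suc i) = bfs_ball W r i \<union> {v\<in>W. \<exists>u\<in>bfs_ball W r i. (u, v) \<in> E}"

fun bfs_layer :: "'v set \<Rightarrow> 'v \<Rightarrow> nat \<Rightarrow> 'v set" where
  "bfs_layer W r 0 = {r}"
| "bfs_layer W r (Suc i) = bfs_ball W r (Suc i) - bfs_ball W r i"

lemma bfs_ball_mono: "i \<le> j \<Longrightarrow> bfs_ball W r i \<subseteq> bfs_ball W r j"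
proof (induction j)
  case (Suc j)
  then show ?case by (cases "i = Suc j") auto
qed simp

lemma bfs_ball_subset: "r \<in> W \<Longrightarrow> bfs_ball W r i \<subseteq> W"
  by (induction i) auto

lemma bfs_layer_subset_ball: "bfs_layer W r i \<subseteq> bfs_ball W r i"
  by (cases i) auto

lemma bfs_layer_subset: "r \<in> W \<Longrightarrow> bfs_layer W r i \<subseteq> W"
  using bfs_layer_subset_ball bfs_ball_subset by blast

lemma bfs_ball_imp_layer: "v \<in> bfs_ball W r i \<Longrightarrow> \<exists>j\<le>i. v \<in> bfs_layer W r j"
proof (induction i)
  case (Suc i)
  show ?case
  proof (cases "v \<in> bfs_ball W r i")
    case False
    with Suc.prems have "v \<in> bfs_layer W r (Suc i)" by simp
    then show ?thesis by blast
  qed (use Suc.IH le_SucI in blast)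
qed simp

lemma bfs_layer_unique:
  assumes "v \<in> bfs_layer W r i" "v \<in> bfs_layer W r j"
  shows "i = j"
proof -
  have False if "v \<in> bfs_layer W r i" "v \<in> bfs_layer W r j" "i < j" for i j
  proof -
    obtain j' where j': "j = Suc j'" "i \<le> j'" using \<open>i < j\<close> by (cases j) auto
    have "v \<in> bfs_ball W r j'" using that(1) bfs_layer_subset_ball bfs_ball_mono[OF j'(2)] by blast
    then show False using that(2) j' by simp
  qed
  then show ?thesis using assms by (metis linorder_neqE_nat)
qed

lemma bfs_layers_disjoint: "i \<noteq> j \<Longrightarrow> bfs_layer W r i \<inter> bfs_layer W r j = {}"
  using bfs_layer_unique by blast

lemma bfs_layer_edge:
  assumes "u \<in> bfs_layer W r i" "v \<in> bfs_layer W r j" "(u, v) \<in> E" "v \<in> W"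
  shows "j \<le> Suc i"
proof (rule ccontr)
  assume "\<not> j \<le> Suc i"
  then obtain j' where j': "j = Suc j'" "Suc i \<le> j'" by (cases j) auto
  have "u \<in> bfs_ball W r i" using assms(1) bfs_layer_subset_ball by blast
  then have "v \<in> bfs_ball W r (Suc i)" using assms by auto
  then have "v \<in> bfs_ball W r j'" using bfs_ball_mono[OF j'(2)] by blast
  then show False using assms(2) j' by simp
qed

lemma bfs_layer_parent:
  assumes "v \<in> bfs_layer W r (Suc i)"
  obtains u where "u \<in> bfs_layer W r i" "(u, v) \<in> E"
proof -
  from assms obtain u where u: "u \<in> bfs_ball W r i" "(u, v) \<in> E" "v \<notin> bfs_ball W r i" by auto
  obtain j where j: "j \<le> i" "u \<in> bfs_layer W r j" using bfs_ball_imp_layer[OF u(1)] by blast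
  have "j = i"
  proof (rule ccontr)
    assume "j \<noteq> i"
    then have "Suc j \<le> i" using j by simp
    have "u \<in> bfs_ball W r j" using j bfs_layer_subset_ball by blast
    then have "v \<in> bfs_ball W r (Suc j)" using assms u by auto
    then show False using bfs_ball_mono[OF \<open>Suc j \<le> i\<close>] u by blast
  qed
  then show thesis using that j u by blast
qed

lemma reachable_imp_bfs_ball:
  assumes "(r, v) \<in> (E \<inter> W \<times> W)\<^sup>*"
  shows "\<exists>i. v \<in> bfs_ball W r i"
  using assms
proof (induction rule: rtrancl_induct)
  case base
  then show ?case by (intro exI[of _ 0]) simp
next
  case (step y z)
  then obtain i where "y \<in> bfs_ball W r i" by blast
  then have "z \<in> bfs_ball W r (Suc i)" using step by auto
  then show ?case by blast
qed

lemma bfs_layer_chain: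
  "v \<in> bfs_layer W r k \<Longrightarrow>
    \<exists>f. f k = v \<and> (\<forall>i\<le>k. f i \<in> bfs_layer W r i) \<and> (\<forall>i<k. (f i, f (Suc i)) \<in> E)"
proof (induction k arbitrary: v)
  case 0
  then show ?case by (intro exI[of _ "\<lambda>_. v"]) simp
next
  case (Suc k)
  obtain u where u: "u \<in> bfs_layer W r k" "(u, v) \<in> E"
    using bfs_layer_parent[OF Suc.prems] .
  obtain g where g: "g k = u" "\<forall>i\<le>k. g i \<in> bfs_layer W r i" "\<forall>i<k. (g i, g (Suc i)) \<in> E"
    using Suc.IH[OF u(1)] by blast
  have "\<forall>i\<le>Suc k. (g(Suc k := v)) i \<in> bfs_layer W r i"
    using g Suc.prems le_Suc_eq by auto
  moreover have "\<forall>i<Suc k. ((g(Suc k := v)) i, (g(Suc k := v)) (Suc i)) \<in> E"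
    using g u less_Suc_eq by auto
  ultimately show ?case by (intro exI[of _ "g(Suc k := v)"]) simp
qed

declare bfs_ball.simps(2) [simp del] bfs_layer.simps(2) [simp del]

definition connected_on :: "'v set \<Rightarrow> bool" where
  "connected_on W \<longleftrightarrow> (\<forall>u\<in>W. \<forall>v\<in>W. (u, v) \<in> (E \<inter> W \<times> W)\<^sup>*)"

lemma bfs_layer_subset_V: "W \<subseteq> V \<Longrightarrow> r \<in> W \<Longrightarrow> bfs_layer W r i \<subseteq> V"
  using bfs_layer_subset by blast

lemma bfs_layer_edge_sym:
  assumes "r \<in> W" "u \<in> bfs_layer W r i" "v \<in> bfs_layer W r j" "(u, v) \<in> E"
  shows "j \<le> Suc i" "i \<le> Suc j"
  using bfs_layer_edge[OF assms(2,3,4)] bfs_layer_edge[OF assms(3,2)] edge_sym assms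
    bfs_layer_subset[OF assms(1)] by blast+

lemma induced_sub_path_bfs_layer:
  assumes "W \<subseteq> V" "r \<in> W" "v \<in> bfs_layer W r k"
  shows "path (Suc k) \<prec> (V, E)"
proof -
  obtain f where f: "f k = v" "\<forall>i\<le>k. f i \<in> bfs_layer W r i" "\<forall>i<k. (f i, f (Suc i)) \<in> E"
    using bfs_layer_chain[OF assms(3)] by blast
  have layer: "f i \<in> bfs_layer W r i" if "i < Suc k" for i
    using f(2) that by simp
  show ?thesis
  proof (rule induced_sub_pathI)
    show "inj_on f {..<Suc k}"
      using layer bfs_layer_unique unfolding inj_on_def by (metis lessThan_iff)
    show "f ` {..<Suc k} \<subseteq> V"
      using layer bfs_layer_subset[OF assms(2)] assms(1) by blast
    show "\<forall>i<Suc k. \<forall>j<Suc k. (f i, f j) \<in> E \<longleftrightarrow> j = Suc i \<or> i = Suc j"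
    proof (intro allI impI iffI)
      fix i j assume ij: "i < Suc k" "j < Suc k" and e: "(f i, f j) \<in> E"
      then have "j \<le> Suc i" "i \<le> Suc j"
        using bfs_layer_edge_sym[OF assms(2) layer layer] by blast+
      moreover have "i \<noteq> j" using e by auto
      ultimately show "j = Suc i \<or> i = Suc j" by linarith
    next
      fix i j assume "i < Suc k" "j < Suc k" "j = Suc i \<or> i = Suc j"
      then show "(f i, f j) \<in> E" using f(3) edge_sym by auto
    qed
  qed
qed

end

context forbidden_free
begin

lemma bfs_layer_index_bound:
  assumes "W \<subseteq> V" "r \<in> W" "v \<in> bfs_layer W r k"
  shows "Suc k < n"
proof (rule ccontr)
  assume "\<not> Suc k < n"
  then have "path n \<prec> path (Suc k)"
    by (intro path_induced_sub_path) simp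
  then have "path n \<prec> (V, E)"
    using induced_sub_path_bfs_layer[OF assms] by (rule induced_sub_trans)
  with no_path show False ..
qed

lemma connected_on_bfs_layers:
  assumes "W \<subseteq> V" "connected_on W" "r \<in> W"
  shows "W \<subseteq> (\<Union>j<n. bfs_layer W r j)"
proof
  fix v assume "v \<in> W"
  with assms(2,3) have "(r, v) \<in> (E \<inter> W \<times> W)\<^sup>*"
    unfolding connected_on_def by blast
  then obtain i where "v \<in> bfs_ball W r i"
    using reachable_imp_bfs_ball by blast
  then obtain j where "v \<in> bfs_layer W r j"
    using bfs_ball_imp_layer by blast
  moreover have "j < n"
    using bfs_layer_index_bound[OF assms(1,3) calculation] by simp
  ultimately show "v \<in> (\<Union>j<n. bfs_layer W r j)"
    by blast
qed

end

section \<open>Bounding sparse subsets of a layer\<close>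

definition homogeneous_matching_bound :: "nat \<Rightarrow> nat \<Rightarrow> nat" where
  "homogeneous_matching_bound k m =
     outdegree_bound k (ramsey_bound (ramsey_bound m m) (ramsey_bound m m))"

definition matching_bound :: "nat \<Rightarrow> nat \<Rightarrow> nat \<Rightarrow> nat" where
  "matching_bound n k m = homogeneous_matching_bound k (max n m)"

primrec layer_matching_bound :: "nat \<Rightarrow> nat \<Rightarrow> nat" where
  "layer_matching_bound n 0 = 2"
| "layer_matching_bound n (Suc i) = matching_bound n n (layer_matching_bound n i)"

definition layer_size_bound :: "nat \<Rightarrow> nat \<Rightarrow> nat \<Rightarrow> nat" where
  "layer_size_bound n k j =
     (case j of 0 \<Rightarrow> 2 | Suc i \<Rightarrow> matching_bound n k (layer_matching_bound n i))"

definition heavy_bound :: "nat \<Rightarrow> nat \<Rightarrow> nat" where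
  "heavy_bound n k = (\<Sum>j<n. layer_size_bound n k j)"

context forbidden_free
begin

text \<open>Each \<open>p y\<close> is adjacent to few \<open>y' \<in> Y\<close>, so Ramsey's theorem yields a large set on which \<open>p\<close>
  is an induced matching, and then homogeneous sides.\<close>

lemma obtain_homogeneous_matching:
  assumes "finite Y" "\<forall>y\<in>Y. (p y, y) \<in> E"
    and sparse: "\<forall>y\<in>Y. card {y'\<in>Y. (p y, y') \<in> E} < k"
    and large: "homogeneous_matching_bound k m \<le> card Y"
  obtains X where "X \<subseteq> Y" "card X = m" "inj_on p X" "\<forall>x\<in>X. \<forall>y\<in>X. (p x, y) \<in> E \<longleftrightarrow> x = y"
    "complete_on E X \<or> edgeless_on E X" "complete_on E (p ` X) \<or> edgeless_on E (p ` X)"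
proof -
  define R where "R = ramsey_bound m m"
  obtain Y1 where Y1: "Y1 \<subseteq> Y" "card Y1 = ramsey_bound R R"
    and no_cross: "\<forall>x\<in>Y1. \<forall>y\<in>Y1. x \<noteq> y \<longrightarrow> (p x, y) \<notin> E"
    using bounded_outdegree_independent_subset[OF assms(1) sparse, of "ramsey_bound R R"] large
    unfolding homogeneous_matching_bound_def R_def by blast
  have matched: "\<forall>x\<in>Y1. \<forall>y\<in>Y1. (p x, y) \<in> E \<longleftrightarrow> x = y"
    using no_cross Y1(1) assms(2) by blast
  have fin1: "finite Y1" using Y1(1) assms(1) by (rule finite_subset)
  obtain Y2 where Y2: "Y2 \<subseteq> Y1" "card Y2 = R" "complete_on E Y2 \<or> edgeless_on E Y2"
    using obtain_homogeneous[OF fin1] Y1(2) by auto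
  have inj2: "inj_on p Y2"
    using matching_fun_inj_on[OF matched] Y2(1) by (rule inj_on_subset)
  have "card (p ` Y2) = R"
    using card_image[OF inj2] Y2(2) by simp
  then obtain Z where Z: "Z \<subseteq> p ` Y2" "card Z = m" "complete_on E Z \<or> edgeless_on E Z"
    using obtain_homogeneous[of "p ` Y2" m] finite_subset[OF Y2(1) fin1] unfolding R_def by auto
  define X where "X = {y\<in>Y2. p y \<in> Z}"
  have X_sub: "X \<subseteq> Y2" and pX: "p ` X = Z"
    unfolding X_def using Z(1) by auto
  have inj: "inj_on p X"
    using inj2 X_sub by (rule inj_on_subset)
  show thesis
  proof (rule that[OF _ _ inj])
    show "X \<subseteq> Y" using X_sub Y2(1) Y1(1) by blast
    show "card X = m" using card_image[OF inj] pX Z(2) by simp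
    show "\<forall>x\<in>X. \<forall>y\<in>X. (p x, y) \<in> E \<longleftrightarrow> x = y" using matched X_sub Y2(1) by blast
    show "complete_on E X \<or> edgeless_on E X"
      using Y2(3) complete_on_subset[OF _ X_sub] edgeless_on_subset[OF _ X_sub] by blast
    show "complete_on E (p ` X) \<or> edgeless_on E (p ` X)"
      using Z(3) pX by simp
  qed
qed

lemma obtain_edgeless_matching:
  assumes "Y \<subseteq> V" "p ` Y \<subseteq> V" "Y \<inter> p ` Y = {}" "\<forall>y\<in>Y. (p y, y) \<in> E"
    and sparse: "\<forall>y\<in>Y. card {y'\<in>Y. (p y, y') \<in> E} < k"
    and large: "matching_bound n k m \<le> card Y"
  obtains X where "X \<subseteq> Y" "m \<le> card X" "inj_on p X" "perfect_matching_between E X (p ` X)"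
    "edgeless_on E X" "edgeless_on E (p ` X)"
proof -
  obtain X where X: "X \<subseteq> Y" "card X = max n m" "inj_on p X"
    "\<forall>x\<in>X. \<forall>y\<in>X. (p x, y) \<in> E \<longleftrightarrow> x = y"
    "complete_on E X \<or> edgeless_on E X" "complete_on E (p ` X) \<or> edgeless_on E (p ` X)"
    using obtain_homogeneous_matching[OF finite_subset_V[OF assms(1)] assms(4) sparse] large
    unfolding matching_bound_def by blast
  have pm: "perfect_matching_between E X (p ` X)"
    using X(4) by (rule perfect_matching_between_image)
  have "X \<subseteq> V" "p ` X \<subseteq> V" "X \<inter> p ` X = {}"
    using X(1) assms(1-3) by blast+
  then have "edgeless_on E X \<and> edgeless_on E (p ` X)"
    using matched_homogeneous_edgeless[OF _ _ _ pm _ X(5,6)] X(2) by simp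
  with X(1-3) pm show thesis
    using that by simp
qed

text \<open>Parents in the previous layer are adjacent to few vertices of \<open>T\<close>, so a large \<open>T\<close> would contain
  a large induced matching between consecutive layers; \<open>matchings\<close> bounds those.\<close>

lemma sparse_layer_card_less:
  assumes WV: "W \<subseteq> V" and r: "r \<in> W"
    and matchings: "\<And>A B. A \<subseteq> bfs_layer W r i \<Longrightarrow> B \<subseteq> bfs_layer W r (Suc i) \<Longrightarrow>
      perfect_matching_between E A B \<Longrightarrow> edgeless_on E A \<Longrightarrow> edgeless_on E B \<Longrightarrow> card A < N"
    and T: "T \<subseteq> bfs_layer W r (Suc i)"
    and sparse: "\<forall>q\<in>bfs_layer W r i. card {t\<in>T. (q, t) \<in> E} < k"
  shows "card T < matching_bound n k N"
proof (rule ccontr)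
  assume "\<not> card T < matching_bound n k N"
  define par where "par t = (SOME u. u \<in> bfs_layer W r i \<and> (u, t) \<in> E)" for t
  have par: "par t \<in> bfs_layer W r i \<and> (par t, t) \<in> E" if "t \<in> T" for t
  proof -
    have "t \<in> bfs_layer W r (Suc i)" using that T by blast
    then obtain u where "u \<in> bfs_layer W r i" "(u, t) \<in> E"
      by (rule bfs_layer_parent)
    then have "\<exists>u. u \<in> bfs_layer W r i \<and> (u, t) \<in> E" by blast
    then show ?thesis
      unfolding par_def by (rule someI_ex)
  qed
  obtain X where X: "X \<subseteq> T" "N \<le> card X" "inj_on par X" "perfect_matching_between E X (par ` X)"
    "edgeless_on E X" "edgeless_on E (par ` X)"
  proof (rule obtain_edgeless_matching)
    show "T \<subseteq> V" "par ` T \<subseteq> V"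
      using T par bfs_layer_subset_V[OF WV r] by blast+
    have "bfs_layer W r (Suc i) \<inter> bfs_layer W r i = {}"
      by (rule bfs_layers_disjoint) simp
    then show "T \<inter> par ` T = {}"
      using T par by blast
    show "\<forall>t\<in>T. (par t, t) \<in> E" "\<forall>t\<in>T. card {t'\<in>T. (par t, t') \<in> E} < k"
      using par sparse by auto
    show "matching_bound n k N \<le> card T"
      using \<open>\<not> card T < matching_bound n k N\<close> by simp
  qed
  have "card (par ` X) < N"
  proof (rule matchings)
    show "par ` X \<subseteq> bfs_layer W r i" "X \<subseteq> bfs_layer W r (Suc i)"
      using X(1) T par by blast+
    show "perfect_matching_between E (par ` X) X"
      using X(4) by (rule perfect_matching_between_sym)
  qed (use X in auto)
  then show False
    using card_image[OF X(3)] X(2) by simp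
qed

text \<open>In the induction step, a vertex of layer \<open>i\<close> with \<open>n\<close> neighbours in \<open>A\<close> would be the centre of a
  \<open>K\<^sub>1\<^sub>,\<^sub>n\<^sup>*\<close> whose pendant vertices are their partners in \<open>B\<close>.\<close>

lemma layer_matching_card_less:
  assumes WV: "W \<subseteq> V" and r: "r \<in> W"
  shows "A \<subseteq> bfs_layer W r i \<Longrightarrow> B \<subseteq> bfs_layer W r (Suc i) \<Longrightarrow>
    perfect_matching_between E A B \<Longrightarrow> edgeless_on E A \<Longrightarrow> edgeless_on E B \<Longrightarrow>
    card A < layer_matching_bound n i"
proof (induction i arbitrary: A B)
  case 0
  then have "card A \<le> card {r}" by (intro card_mono) auto
  then show ?case by simp
next
  case (Suc i)
  have "card A < matching_bound n n (layer_matching_bound n i)"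
  proof (rule sparse_layer_card_less[OF WV r Suc.IH Suc.prems(1)])
    show "\<forall>q\<in>bfs_layer W r i. card {a\<in>A. (q, a) \<in> E} < n"
    proof
      fix q assume q: "q \<in> bfs_layer W r i"
      have no_edge: "\<forall>b\<in>B. (q, b) \<notin> E"
        using bfs_layer_edge_sym(1)[OF r q] Suc.prems(2) by fastforce
      show "card {a\<in>A. (q, a) \<in> E} < n"
      proof (rule star_subdiv_free[OF _ _ _ _ _ _ Suc.prems(3-5) no_edge])
        show "q \<in> V" "A \<subseteq> V" "B \<subseteq> V"
          using q Suc.prems(1,2) bfs_layer_subset_V[OF WV r] by blast+
        have "bfs_layer W r i \<inter> bfs_layer W r (Suc i) = {}"
          "bfs_layer W r i \<inter> bfs_layer W r (Suc (Suc i)) = {}"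
          "bfs_layer W r (Suc i) \<inter> bfs_layer W r (Suc (Suc i)) = {}"
          by (rule bfs_layers_disjoint; simp)+
        then show "q \<notin> A" "q \<notin> B" "A \<inter> B = {}"
          using q Suc.prems(1,2) by blast+
      qed
    qed
  qed
  then show ?case by simp
qed

lemma sparse_set_layer_card_less:
  assumes WV: "W \<subseteq> V" and r: "r \<in> W" and "S \<subseteq> W"
    and sparse: "\<forall>d\<in>W. card {s\<in>S. (d, s) \<in> E} < k"
  shows "card (S \<inter> bfs_layer W r j) < layer_size_bound n k j"
proof (cases j)
  case 0
  then have "card (S \<inter> bfs_layer W r j) \<le> card {r}" by (intro card_mono) auto
  then show ?thesis using 0 by (simp add: layer_size_bound_def)
next
  case (Suc i)
  have "card (S \<inter> bfs_layer W r (Suc i)) < matching_bound n k (layer_matching_bound n i)"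
  proof (rule sparse_layer_card_less[OF WV r])
    show "card A < layer_matching_bound n i"
      if "A \<subseteq> bfs_layer W r i" "B \<subseteq> bfs_layer W r (Suc i)" "perfect_matching_between E A B"
        "edgeless_on E A" "edgeless_on E B" for A B
      using layer_matching_card_less[OF WV r that] .
    show "\<forall>q\<in>bfs_layer W r i. card {t\<in>S \<inter> bfs_layer W r (Suc i). (q, t) \<in> E} < k"
    proof
      fix q assume "q \<in> bfs_layer W r i"
      then have "card {s\<in>S. (q, s) \<in> E} < k"
        using sparse bfs_layer_subset[OF r] by blast
      moreover have "card {t\<in>S \<inter> bfs_layer W r (Suc i). (q, t) \<in> E} \<le> card {s\<in>S. (q, s) \<in> E}"
        using assms(3) WV by (intro card_mono finite_subset_V) auto
      ultimately show "card {t\<in>S \<inter> bfs_layer W r (Suc i). (q, t) \<in> E} < k"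
        by linarith
    qed
  qed (rule Int_lower2)
  then show ?thesis using Suc by (simp add: layer_size_bound_def)
qed

lemma obtain_heavy_vertex:
  assumes WV: "W \<subseteq> V" and "connected_on W" "S \<subseteq> W" and large: "heavy_bound n k \<le> card S"
  obtains d where "d \<in> W" "k \<le> card {s\<in>S. (d, s) \<in> E}"
proof (rule ccontr)
  assume "\<not> thesis"
  then have sparse: "\<forall>d\<in>W. card {s\<in>S. (d, s) \<in> E} < k"
    using that not_le by blast
  have "layer_size_bound n k 0 \<le> heavy_bound n k"
    unfolding heavy_bound_def using n_pos by (intro member_le_sum) auto
  then obtain r where "r \<in> S"
    using large by (fastforce simp: layer_size_bound_def)
  then have r: "r \<in> W" using assms(3) by blast
  have S_eq: "(\<Union>j<n. S \<inter> bfs_layer W r j) = S"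
    using connected_on_bfs_layers[OF WV assms(2) r] assms(3) by blast
  have "card S \<le> (\<Sum>j<n. card (S \<inter> bfs_layer W r j))"
    using card_UN_le[of "{..<n}" "\<lambda>j. S \<inter> bfs_layer W r j"] unfolding S_eq by simp
  also have "\<dots> < (\<Sum>j<n. layer_size_bound n k j)"
    using sparse_set_layer_card_less[OF WV r assms(3) sparse] n_pos
    by (intro sum_strict_mono) auto
  finally show False
    using large unfolding heavy_bound_def by simp
qed

end

section \<open>Components and the main induction\<close>

context simple_graph
begin

definition component_of :: "'v set \<Rightarrow> 'v \<Rightarrow> 'v set" where
  "component_of W y = {u\<in>W. (y, u) \<in> (E \<inter> W \<times> W)\<^sup>*}"

lemma component_of_subset: "component_of W y \<subseteq> W"
  unfolding component_of_def by blast

lemma component_of_self: "y \<in> W \<Longrightarrow> y \<in> component_of W y"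
  unfolding component_of_def by blast

lemma component_of_step:
  "u \<in> component_of W y \<Longrightarrow> v \<in> W \<Longrightarrow> (u, v) \<in> E \<Longrightarrow> v \<in> component_of W y"
  unfolding component_of_def by (auto intro: rtrancl_into_rtrancl)

lemma sym_rtrancl_restrict: "sym ((E \<inter> W \<times> W)\<^sup>*)"
  by (rule sym_rtrancl) (use sym_E in \<open>auto simp: sym_def\<close>)

lemma connected_on_component_of:
  assumes "y \<in> W"
  shows "connected_on (component_of W y)"
proof -
  let ?C = "component_of W y"
  have reach: "(y, u) \<in> (E \<inter> ?C \<times> ?C)\<^sup>*" if "(y, u) \<in> (E \<inter> W \<times> W)\<^sup>*" for u
    using that
  proof (induction rule: rtrancl_induct)
    case (step a b)
    then have "(a, b) \<in> E \<inter> ?C \<times> ?C"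
      unfolding component_of_def by (auto intro: rtrancl_into_rtrancl)
    with step.IH show ?case by (rule rtrancl_into_rtrancl)
  qed simp
  have "sym ((E \<inter> ?C \<times> ?C)\<^sup>*)"
    by (rule sym_rtrancl) (use sym_E in \<open>auto simp: sym_def\<close>)
  then show ?thesis
    using reach unfolding connected_on_def component_of_def sym_def
    by (blast intro: rtrancl_trans)
qed

lemma component_of_eq:
  assumes "z \<in> component_of W y"
  shows "component_of W z = component_of W y"
proof -
  have "(y, z) \<in> (E \<inter> W \<times> W)\<^sup>*" "(z, y) \<in> (E \<inter> W \<times> W)\<^sup>*"
    using assms sym_rtrancl_restrict unfolding component_of_def sym_def by blast+
  then show ?thesis
    unfolding component_of_def by (blast intro: rtrancl_trans)
qed

lemma components_separated:
  assumes "u \<in> component_of W y" "v \<in> component_of W z"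
    and "component_of W y \<noteq> component_of W z"
  shows "u \<noteq> v" "(u, v) \<notin> E"
proof -
  show "u \<noteq> v"
    using assms component_of_eq by metis
  show "(u, v) \<notin> E"
  proof
    assume "(u, v) \<in> E"
    then have "v \<in> component_of W y"
      using component_of_step[OF assms(1)] assms(2) component_of_subset by blast
    then show False
      using assms component_of_eq by metis
  qed
qed

lemma branching_verts_component_of:
  "y \<in> branching_verts (U, E) \<Longrightarrow> y \<in> branching_verts (component_of U y, E)"
  unfolding branching_verts_def using component_of_self component_of_step by fastforce

lemma branching_verts_nbhd:
  assumes "y \<in> branching_verts (W, E)" "(d, y) \<in> E"
    and closed: "\<forall>p\<in>W. (y, p) \<in> E \<longrightarrow> p = d \<or> (d, p) \<in> E"
  shows "y \<in> branching_verts ({w\<in>W. (d, w) \<in> E}, E)"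
proof -
  obtain a c where ac: "y \<in> W" "a \<in> W" "c \<in> W" "a \<noteq> c" "(y, a) \<in> E" "(y, c) \<in> E" "(a, c) \<notin> E"
    using assms(1) unfolding branching_verts_def by auto
  have "(d, a) \<in> E \<and> (d, c) \<in> E"
    using closed ac edge_sym by metis
  then show ?thesis
    using ac assms(2) unfolding branching_verts_def by auto
qed

lemma obtain_component_representatives:
  assumes "finite Y" "m \<le> card (component_of U ` Y)"
  obtains y where "\<forall>i<m. y i \<in> Y"
    "\<forall>i<m. \<forall>j<m. component_of U (y i) = component_of U (y j) \<longrightarrow> i = j"
proof -
  obtain Cs where Cs: "Cs \<subseteq> component_of U ` Y" "card Cs = m"
    using obtain_subset_with_card_n[OF assms(2)] by blast
  obtain g where g: "inj_on g {..<m}" "g ` {..<m} = Cs"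
    by (rule obtain_indexing[OF finite_subset[OF Cs(1) finite_imageI[OF assms(1)]] Cs(2)])
  define y where "y i = inv_into Y (component_of U) (g i)" for i
  have y: "y i \<in> Y" "component_of U (y i) = g i" if "i < m" for i
  proof -
    have "g i \<in> component_of U ` Y" using g(2) Cs(1) that by blast
    then show "y i \<in> Y" "component_of U (y i) = g i"
      unfolding y_def by (rule inv_into_into, rule f_inv_into_f)
  qed
  show thesis
    by (rule that) (use y g(1) in \<open>auto simp: inj_on_def\<close>)
qed

lemma obtain_branching_witnesses:
  assumes "\<forall>i<m. y i \<in> branching_verts (U, E)"
  obtains a c where "\<forall>i<m. a i \<in> U \<and> c i \<in> U \<and> a i \<noteq> c i \<and>
    (y i, a i) \<in> E \<and> (y i, c i) \<in> E \<and> (a i, c i) \<notin> E"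
proof -
  have "\<forall>i\<in>{..<m}. \<exists>w. fst w \<in> U \<and> snd w \<in> U \<and> fst w \<noteq> snd w \<and>
      (y i, fst w) \<in> E \<and> (y i, snd w) \<in> E \<and> (fst w, snd w) \<notin> E"
    using assms unfolding branching_verts_def by fastforce
  from bchoice[OF this] obtain w where "\<forall>i\<in>{..<m}. fst (w i) \<in> U \<and> snd (w i) \<in> U \<and>
      fst (w i) \<noteq> snd (w i) \<and> (y i, fst (w i)) \<in> E \<and> (y i, snd (w i)) \<in> E \<and> (fst (w i), snd (w i)) \<notin> E"
    by blast
  then show thesis
    by (intro that[of "fst \<circ> w" "snd \<circ> w"]) simp
qed

lemma complete_on_insert:
  "complete_on E K \<Longrightarrow> \<forall>x\<in>K. (d, x) \<in> E \<Longrightarrow> complete_on E (insert d K)"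
  unfolding complete_on_def using edge_sym by blast

definition clique_joined :: "'v set \<Rightarrow> 'v set \<Rightarrow> bool" where
  "clique_joined K W \<longleftrightarrow> W \<inter> K = {} \<and> complete_on E K \<and> (\<forall>x\<in>K. \<forall>w\<in>W. (x, w) \<in> E)"

lemma clique_joined_insert:
  assumes "clique_joined K W" "d \<in> W" "C \<subseteq> {w\<in>W. (d, w) \<in> E}"
  shows "clique_joined (insert d K) C"
proof -
  have "\<forall>x\<in>K. (d, x) \<in> E"
    using assms(1,2) edge_sym unfolding clique_joined_def by blast
  then have "complete_on E (insert d K)"
    using complete_on_insert assms(1) unfolding clique_joined_def by blast
  moreover have "C \<inter> insert d K = {}"
    using assms no_loop unfolding clique_joined_def by blast
  moreover have "\<forall>x\<in>insert d K. \<forall>w\<in>C. (x, w) \<in> E"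
    using assms unfolding clique_joined_def by blast
  ultimately show ?thesis
    unfolding clique_joined_def by blast
qed

end

context forbidden_free
begin

lemma two_apexes_free:
  assumes "c \<in> V" "q \<in> V" "c \<noteq> q" "(c, q) \<notin> E"
    and "X \<subseteq> V" "c \<notin> X" "q \<notin> X" "\<forall>x\<in>X. (c, x) \<in> E \<and> (q, x) \<in> E"
    and homogeneous: "complete_on E X \<or> edgeless_on E X"
  shows "card X < n"
proof (rule ccontr)
  assume "\<not> card X < n"
  then obtain X' where X': "X' \<subseteq> X" "card X' = n"
    by (meson not_less obtain_subset_with_card_n)
  obtain h where h: "inj_on h {..<n}" "h ` {..<n} = X'"
    using obtain_indexing[OF finite_subset_V X'(2)] X'(1) assms(5) by blast
  have facts: "h ` {..<n} \<subseteq> V" "c \<notin> h ` {..<n}" "q \<notin> h ` {..<n}"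
    "\<forall>i<n. (c, h i) \<in> E \<and> (q, h i) \<in> E"
    using h(2) X'(1) assms(5-8) by auto
  from homogeneous show False
  proof
    assume "complete_on E X"
    then have "complete_on E (h ` {..<n})" using h(2) X'(1) complete_on_subset by blast
    then have "join (edgeless 2) (complete n) \<prec> (V, E)"
      by (rule induced_sub_join_edgeless_completeI[OF h(1) assms(1,2) facts(1-3) assms(3,4) facts(4)])
    with no_join_edgeless_complete show False ..
  next
    assume "edgeless_on E X"
    then have "edgeless_on E (h ` {..<n})" using h(2) X'(1) edgeless_on_subset by blast
    then have "complete_bip 2 n \<prec> (V, E)"
      by (rule induced_sub_complete_bip_2I[OF h(1) assms(1,2) facts(1-3) assms(3,4) facts(4)])
    with no_complete_bip_2 show False ..
  qed
qed

lemma common_neighbours_card_less: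
  assumes "c \<in> V" "q \<in> V" "c \<noteq> q" "(c, q) \<notin> E"
  shows "card {x\<in>V. (c, x) \<in> E \<and> (q, x) \<in> E} < ramsey_bound n n"
proof (rule ccontr)
  let ?S = "{x\<in>V. (c, x) \<in> E \<and> (q, x) \<in> E}"
  assume "\<not> card ?S < ramsey_bound n n"
  then have "ramsey_bound n n \<le> card ?S" by simp
  moreover have "finite ?S"
    using finite_subset_V by simp
  ultimately obtain R where R: "R \<subseteq> ?S" "card R = n" "complete_on E R \<or> edgeless_on E R"
    using obtain_homogeneous by blast
  have "card R < n"
  proof (rule two_apexes_free[OF assms _ _ _ _ R(3)])
    show "R \<subseteq> V" "c \<notin> R" "q \<notin> R" "\<forall>x\<in>R. (c, x) \<in> E \<and> (q, x) \<in> E"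
      using R(1) by auto
  qed
  with R(2) show False by simp
qed

definition (in -) out_bound :: "nat \<Rightarrow> nat" where
  "out_bound n = matching_bound n (ramsey_bound n n) n"

text \<open>A non-neighbour of \<open>d\<close> sees few neighbours of \<open>d\<close>, so the private neighbours \<open>p y\<close> give an
  induced matching from which \<open>d\<close> together with the edges \<open>y p y\<close> forms a \<open>K\<^sub>1\<^sub>,\<^sub>n\<^sup>*\<close>.\<close>

lemma private_neighbours_card_less:
  assumes d: "d \<in> V" and "Y \<subseteq> V" "\<forall>y\<in>Y. (d, y) \<in> E"
    and outside: "\<forall>y\<in>Y. \<exists>p\<in>V. p \<noteq> d \<and> (d, p) \<notin> E \<and> (y, p) \<in> E"
  shows "card Y < out_bound n"
proof (rule ccontr)
  assume "\<not> card Y < out_bound n"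
  have "\<forall>y\<in>Y. \<exists>p. p \<in> V \<and> p \<noteq> d \<and> (d, p) \<notin> E \<and> (y, p) \<in> E"
    using outside by blast
  from bchoice[OF this] obtain p where p: "\<forall>y\<in>Y. p y \<in> V \<and> p y \<noteq> d \<and> (d, p y) \<notin> E \<and> (y, p y) \<in> E"
    by blast
  have sparse: "card {y'\<in>Y. (p y, y') \<in> E} < ramsey_bound n n" if "y \<in> Y" for y
  proof -
    have "{y'\<in>Y. (p y, y') \<in> E} \<subseteq> {x\<in>V. (d, x) \<in> E \<and> (p y, x) \<in> E}"
      using assms(2,3) by blast
    then have "card {y'\<in>Y. (p y, y') \<in> E} \<le> card {x\<in>V. (d, x) \<in> E \<and> (p y, x) \<in> E}"
      using finite_subset_V by (intro card_mono) auto
    also have "\<dots> < ramsey_bound n n"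
      using p that by (intro common_neighbours_card_less[OF d]) auto
    finally show ?thesis .
  qed
  obtain X where X: "X \<subseteq> Y" "n \<le> card X" "perfect_matching_between E X (p ` X)"
    "edgeless_on E X" "edgeless_on E (p ` X)"
  proof (rule obtain_edgeless_matching)
    show "Y \<subseteq> V" "p ` Y \<subseteq> V" "Y \<inter> p ` Y = {}" "\<forall>y\<in>Y. (p y, y) \<in> E"
      using assms(2,3) p edge_sym by auto
    show "\<forall>y\<in>Y. card {y'\<in>Y. (p y, y') \<in> E} < ramsey_bound n n"
      using sparse by blast
    show "matching_bound n (ramsey_bound n n) n \<le> card Y"
      using \<open>\<not> card Y < out_bound n\<close> unfolding out_bound_def by simp
  qed
  have "card {x\<in>X. (d, x) \<in> E} < n"
  proof (rule star_subdiv_free[OF d _ _ _ _ _ X(3-5)])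
    show "X \<subseteq> V" "p ` X \<subseteq> V" "d \<notin> X" "d \<notin> p ` X" "\<forall>b\<in>p ` X. (d, b) \<notin> E"
      using X(1) assms(2,3) p by auto
    show "X \<inter> p ` X = {}"
    proof (rule ccontr)
      assume "X \<inter> p ` X \<noteq> {}"
      then obtain x where "x \<in> X" "p x \<in> X" by blast
      then show False using X(1) assms(3) p by blast
    qed
  qed
  moreover have "{x\<in>X. (d, x) \<in> E} = X"
    using X(1) assms(3) by blast
  ultimately show False
    using X(2) by simp
qed

lemma no_branching_verts_below_clique:
  assumes "W \<subseteq> V" "K \<subseteq> V" "clique_joined K W" "n \<le> card K + 1"
  shows "branching_verts (W, E) = {}"
proof (rule ccontr)
  have WK: "W \<inter> K = {}" "complete_on E K" "\<forall>x\<in>K. \<forall>w\<in>W. (x, w) \<in> E"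
    using assms(3) unfolding clique_joined_def by blast+
  assume "branching_verts (W, E) \<noteq> {}"
  then obtain b a c where abc: "b \<in> W" "a \<in> W" "c \<in> W" "a \<noteq> c" "(b, a) \<in> E" "(b, c) \<in> E" "(a, c) \<notin> E"
    unfolding branching_verts_def by auto
  have "n - 1 \<le> card K" using assms(4) by simp
  then obtain K' where K': "K' \<subseteq> K" "card K' = n - 1"
    by (meson obtain_subset_with_card_n)
  let ?X = "insert b K'"
  have "b \<notin> K'" using abc(1) K'(1) WK(1) by blast
  moreover have "finite K'"
    using K'(1) assms(2) finite_subset_V by blast
  ultimately have "card ?X = n"
    using K'(2) n_pos by simp
  moreover have "card ?X < n"
  proof (rule two_apexes_free)
    show "a \<in> V" "c \<in> V" "a \<noteq> c" "(a, c) \<notin> E" "?X \<subseteq> V" "a \<notin> ?X" "c \<notin> ?X"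
      using abc K'(1) assms(1,2) WK(1) by auto
    show "\<forall>x\<in>?X. (a, x) \<in> E \<and> (c, x) \<in> E"
      using abc K'(1) WK(3) edge_sym by blast
    have "\<forall>x\<in>K'. (b, x) \<in> E"
      using abc(1) K'(1) WK(3) edge_sym by blast
    then have "complete_on E ?X"
      by (rule complete_on_insert[OF complete_on_subset[OF WK(2) K'(1)]])
    then show "complete_on E ?X \<or> edgeless_on E ?X" ..
  qed
  ultimately show False by simp
qed

text \<open>Induced paths \<open>a i, y i, c i\<close> in different components of a neighbourhood of \<open>d\<close> form,
  together with \<open>d\<close>, a \<open>K\<^sub>1 + n P\<^sub>3\<close>.\<close>

lemma no_induced_paths_in_distinct_components:
  assumes d: "d \<in> V" and U: "U \<subseteq> V" "\<forall>u\<in>U. (d, u) \<in> E"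
    and "\<forall>i<n. y i \<in> U"
    and "\<forall>i<n. a i \<in> U \<and> c i \<in> U \<and> a i \<noteq> c i \<and>
      (y i, a i) \<in> E \<and> (y i, c i) \<in> E \<and> (a i, c i) \<notin> E"
    and distinct: "\<forall>i<n. \<forall>j<n. component_of U (y i) = component_of U (y j) \<longrightarrow> i = j"
  shows False
proof -
  have paths: "y i \<in> U \<and> a i \<in> U \<and> c i \<in> U \<and> a i \<noteq> c i \<and>
      (y i, a i) \<in> E \<and> (y i, c i) \<in> E \<and> (a i, c i) \<notin> E" if "i < n" for i
    using assms(4,5) that by blast
  define T where "T i (j :: nat) = (if j = 0 then a i else if j = 1 then y i else c i)" for i j
  have three: "j = 0 \<or> j = 1 \<or> j = 2" if "j < 3" for j :: nat
    using that by auto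
  have T_U: "T i j \<in> U" if "i < n" for i j
    using paths that unfolding T_def by auto
  have T_comp: "T i j \<in> component_of U (y i)" if "i < n" for i j
  proof -
    have "y i \<in> component_of U (y i)"
      using paths that by (blast intro: component_of_self)
    moreover from this have "a i \<in> component_of U (y i)" "c i \<in> component_of U (y i)"
      using component_of_step paths that by blast+
    ultimately show ?thesis unfolding T_def by simp
  qed
  have "join (complete 1) (copies n (path 3)) \<prec> (V, E)"
  proof (rule induced_sub_join_complete_copiesI)
    show "d \<in> V" by (rule d)
    show "\<forall>i<n. \<forall>j<3. T i j \<in> V" "\<forall>i<n. \<forall>j<3. (d, T i j) \<in> E"
      using T_U U by blast+
    have "(T i j, T i j') \<in> E \<longleftrightarrow> j' = Suc j \<or> j = Suc j'" "T i j = T i j' \<longrightarrow> j = j'"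
      if "i < n" "j < 3" "j' < 3" for i j j'
    proof -
      note facts = paths[OF \<open>i < n\<close>] edge_sym[of "a i" "y i"] edge_sym[of "c i" "y i"]
        edge_sym[of "a i" "c i"] no_loop[of "a i"] no_loop[of "c i"] no_loop[of "y i"]
      from three[OF \<open>j < 3\<close>] three[OF \<open>j' < 3\<close>]
      show "(T i j, T i j') \<in> E \<longleftrightarrow> j' = Suc j \<or> j = Suc j'" "T i j = T i j' \<longrightarrow> j = j'"
        using facts unfolding T_def by (elim disjE; auto)+
    qed
    then show "\<forall>i<n. \<forall>j<3. \<forall>j'<3. (T i j, T i j') \<in> E \<longleftrightarrow> j' = Suc j \<or> j = Suc j'"
      "\<forall>i<n. \<forall>j<3. \<forall>j'<3. T i j = T i j' \<longrightarrow> j = j'"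
      by blast+
    show "\<forall>i<n. \<forall>i'<n. i \<noteq> i' \<longrightarrow> (\<forall>j<3. \<forall>j'<3. T i j \<noteq> T i' j' \<and> (T i j, T i' j') \<notin> E)"
    proof (intro allI impI conjI)
      fix i i' j j' assume "i < n" "i' < n" "i \<noteq> i'"
      then have "component_of U (y i) \<noteq> component_of U (y i')"
        using distinct by blast
      then show "T i j \<noteq> T i' j'" "(T i j, T i' j') \<notin> E"
        using components_separated[OF T_comp[OF \<open>i < n\<close>] T_comp[OF \<open>i' < n\<close>]] by blast+
    qed
  qed
  with no_join_complete_copies show False ..
qed

lemma components_card_less:
  assumes d: "d \<in> V" and U: "U \<subseteq> V" "\<forall>u\<in>U. (d, u) \<in> E" and Y: "Y \<subseteq> branching_verts (U, E)"
  shows "card (component_of U ` Y) < n"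
proof (rule ccontr)
  assume "\<not> card (component_of U ` Y) < n"
  then have "n \<le> card (component_of U ` Y)" by simp
  moreover have "finite Y"
    using Y U(1) by (intro finite_subset_V) (auto simp: branching_verts_def)
  ultimately obtain y where y: "\<forall>i<n. y i \<in> Y"
    "\<forall>i<n. \<forall>j<n. component_of U (y i) = component_of U (y j) \<longrightarrow> i = j"
    using obtain_component_representatives by blast
  have "\<forall>i<n. y i \<in> branching_verts (U, E)"
    using y(1) Y by blast
  then obtain a c where ac: "\<forall>i<n. a i \<in> U \<and> c i \<in> U \<and> a i \<noteq> c i \<and>
      (y i, a i) \<in> E \<and> (y i, c i) \<in> E \<and> (a i, c i) \<notin> E"
    by (rule obtain_branching_witnesses)
  have yU: "\<forall>i<n. y i \<in> U"
    using y(1) Y unfolding branching_verts_def by auto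
  show False
    by (rule no_induced_paths_in_distinct_components[OF d U yU ac y(2)])
qed

lemma branching_nbhd_card_le:
  assumes "d \<in> V" "U \<subseteq> V" "\<forall>u\<in>U. (d, u) \<in> E" "Y \<subseteq> branching_verts (U, E)"
    and components: "\<And>C. C \<subseteq> U \<Longrightarrow> connected_on C \<Longrightarrow> card (branching_verts (C, E)) < N"
  shows "card Y \<le> n * N"
proof -
  let ?Cs = "component_of U ` Y"
  have Y_sub: "Y \<subseteq> (\<Union>C\<in>?Cs. branching_verts (C, E))"
    using assms(4) branching_verts_component_of by blast
  have "Y \<subseteq> V"
    using assms(2,4) unfolding branching_verts_def by auto
  then have "finite Y" by (rule finite_subset_V)
  have "branching_verts (C, E) \<subseteq> V" if "C \<in> ?Cs" for C
    using that component_of_subset assms(2) unfolding branching_verts_def by force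
  then have "(\<Union>C\<in>?Cs. branching_verts (C, E)) \<subseteq> V"
    by blast
  then have "card Y \<le> card (\<Union>C\<in>?Cs. branching_verts (C, E))"
    by (intro card_mono[OF _ Y_sub] finite_subset_V)
  also have "\<dots> \<le> (\<Sum>C\<in>?Cs. card (branching_verts (C, E)))"
    using \<open>finite Y\<close> by (intro card_UN_le) simp
  also have "\<dots> \<le> (\<Sum>C\<in>?Cs. N)"
  proof (rule sum_mono)
    fix C assume "C \<in> ?Cs"
    then obtain y where "y \<in> Y" "C = component_of U y" by blast
    moreover have "y \<in> U" using \<open>y \<in> Y\<close> assms(4) unfolding branching_verts_def by auto
    ultimately have "card (branching_verts (C, E)) < N"
      using components component_of_subset connected_on_component_of by blast
    then show "card (branching_verts (C, E)) \<le> N" by simp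
  qed
  also have "\<dots> \<le> n * N"
    using components_card_less[OF assms(1-4)] by simp
  finally show ?thesis .
qed

end

primrec branching_bound :: "nat \<Rightarrow> nat \<Rightarrow> nat" where
  "branching_bound n 0 = 1"
| "branching_bound n (Suc t) = heavy_bound n (out_bound n + n * branching_bound n t + 1)"

context forbidden_free
begin

text \<open>The induction on \<open>t\<close>: a clique \<open>K\<close> joined to \<open>W\<close> plays the role of the \<open>K\<^sub>n\<close> in
  \<open>E\<^sub>2 + K\<^sub>n\<close>, and grows by the heavy vertex \<open>d\<close> at each step.\<close>

lemma branching_verts_card_less:
  "W \<subseteq> V \<Longrightarrow> connected_on W \<Longrightarrow> K \<subseteq> V \<Longrightarrow> clique_joined K W \<Longrightarrow> n \<le> card K + t + 1 \<Longrightarrow>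
    card (branching_verts (W, E)) < branching_bound n t"
proof (induction t arbitrary: W K)
  case 0
  then show ?case using no_branching_verts_below_clique by simp
next
  case (Suc t)
  let ?k = "out_bound n + n * branching_bound n t + 1"
  show ?case
  proof (rule ccontr)
    assume "\<not> ?thesis"
    then have "heavy_bound n ?k \<le> card (branching_verts (W, E))" by simp
    moreover have "branching_verts (W, E) \<subseteq> W" by (auto simp: branching_verts_def)
    ultimately obtain d where d: "d \<in> W" "?k \<le> card {s\<in>branching_verts (W, E). (d, s) \<in> E}"
      using obtain_heavy_vertex[OF Suc.prems(1,2)] by blast
    define Y where "Y = {s\<in>branching_verts (W, E). (d, s) \<in> E}"
    define U where "U = {w\<in>W. (d, w) \<in> E}"
    define Y_out where "Y_out = {y\<in>Y. \<exists>p\<in>W. p \<noteq> d \<and> (d, p) \<notin> E \<and> (y, p) \<in> E}"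
    have dV: "d \<in> V" and UV: "U \<subseteq> V" and dU: "\<forall>u\<in>U. (d, u) \<in> E"
      using d(1) Suc.prems(1) unfolding U_def by auto
    have "Y_out \<subseteq> V" "\<forall>y\<in>Y_out. (d, y) \<in> E"
      "\<forall>y\<in>Y_out. \<exists>p\<in>V. p \<noteq> d \<and> (d, p) \<notin> E \<and> (y, p) \<in> E"
      using Suc.prems(1) unfolding Y_out_def Y_def branching_verts_def by auto
    then have "card Y_out < out_bound n"
      by (rule private_neighbours_card_less[OF dV])
    moreover have "card (Y - Y_out) \<le> n * branching_bound n t"
    proof (rule branching_nbhd_card_le[OF dV UV dU])
      show "Y - Y_out \<subseteq> branching_verts (U, E)"
        unfolding U_def Y_def Y_out_def using branching_verts_nbhd by blast
      have "d \<notin> K" "finite K"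
        using d(1) Suc.prems(3,4) finite_subset_V unfolding clique_joined_def by auto
      then have "n \<le> card (insert d K) + t + 1"
        using Suc.prems(5) by simp
      then show "card (branching_verts (C, E)) < branching_bound n t"
        if "C \<subseteq> U" "connected_on C" for C
        using Suc.IH[OF _ that(2) _ clique_joined_insert[OF Suc.prems(4) d(1)]] that(1) Suc.prems(1,3) d(1)
        unfolding U_def by auto
    qed
    moreover have "Y_out \<union> (Y - Y_out) = Y"
      unfolding Y_out_def by blast
    then have "card Y \<le> card Y_out + card (Y - Y_out)"
      using card_Un_le[of Y_out "Y - Y_out"] by simp
    ultimately show False
      using d(2) unfolding Y_def by linarith
  qed
qed

end

section \<open>The seven families have many branching vertices\<close>

definition relabel :: "('a \<Rightarrow> 'b) \<Rightarrow> 'a graph \<Rightarrow> 'b graph" where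
  "relabel f G = (f ` verts G, map_prod f f ` edges G)"

lemma relabel_edge_iff:
  assumes "wf_graph G" "inj_on f (verts G)" "u \<in> verts G" "v \<in> verts G"
  shows "(f u, f v) \<in> edges (relabel f G) \<longleftrightarrow> (u, v) \<in> edges G"
proof
  assume "(f u, f v) \<in> edges (relabel f G)"
  then obtain a b where ab: "(a, b) \<in> edges G" "f u = f a" "f v = f b"
    unfolding relabel_def by auto
  moreover have "a \<in> verts G" "b \<in> verts G"
    using ab(1) assms(1) unfolding wf_graph_def by auto
  ultimately show "(u, v) \<in> edges G"
    using assms(2-4) by (metis inj_onD)
qed (auto simp: relabel_def)

lemma wf_graph_relabel:
  assumes "wf_graph G" "inj_on f (verts G)"
  shows "wf_graph (relabel f G)"
  using assms unfolding wf_graph_def relabel_def sym_def irrefl_def inj_on_def by fastforce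

lemma connected_graph_relabel:
  assumes "connected_graph G"
  shows "connected_graph (relabel f G)"
proof -
  have "(f u, f v) \<in> (edges (relabel f G))\<^sup>*" if "(u, v) \<in> (edges G)\<^sup>*" for u v
    using that
  proof (induction rule: rtrancl_induct)
    case (step y z)
    then have "(f y, f z) \<in> edges (relabel f G)"
      unfolding relabel_def by force
    with step.IH show ?case by (rule rtrancl_into_rtrancl)
  qed simp
  then show ?thesis
    using assms unfolding connected_graph_def relabel_def by auto
qed

lemma relabel_induced_sub:
  assumes "wf_graph G" "inj_on f (verts G)"
  shows "relabel f G \<prec> G"
  unfolding induced_sub_def
proof (intro exI[of _ "inv_into (verts G) f"] conjI ballI)
  show "inj_on (inv_into (verts G) f) (verts (relabel f G))"
    using assms(2) by (simp add: relabel_def inj_on_inv_into)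
  show "inv_into (verts G) f ` verts (relabel f G) \<subseteq> verts G"
    using assms(2) by (auto simp: relabel_def)
  fix x y assume "x \<in> verts (relabel f G)" "y \<in> verts (relabel f G)"
  then obtain u v where "u \<in> verts G" "v \<in> verts G" "x = f u" "y = f v"
    by (auto simp: relabel_def)
  then show "(x, y) \<in> edges (relabel f G) \<longleftrightarrow>
      (inv_into (verts G) f x, inv_into (verts G) f y) \<in> edges G"
    using relabel_edge_iff[OF assms] assms(2) by simp
qed

lemma branching_verts_relabel:
  assumes "wf_graph G" "inj_on f (verts G)"
  shows "branching_verts (relabel f G) = f ` branching_verts G"
proof -
  have vr: "verts (relabel f G) = f ` verts G"
    by (simp add: relabel_def)
  have eq: "f a = f c \<longleftrightarrow> a = c" if "a \<in> verts G" "c \<in> verts G" for a c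
    using assms(2) that by (auto dest: inj_onD)
  note edge = relabel_edge_iff[OF assms]
  show ?thesis
  proof (intro equalityI subsetI)
    fix x assume "x \<in> branching_verts (relabel f G)"
    then obtain u a c where "u \<in> verts G" "a \<in> verts G" "c \<in> verts G" "x = f u" "f a \<noteq> f c"
      "(f u, f a) \<in> edges (relabel f G)" "(f u, f c) \<in> edges (relabel f G)"
      "(f a, f c) \<notin> edges (relabel f G)"
      unfolding branching_verts_def vr by blast
    then show "x \<in> f ` branching_verts G"
      unfolding branching_verts_def using edge eq by blast
  next
    fix x assume "x \<in> f ` branching_verts G"
    then obtain u a c where "u \<in> verts G" "a \<in> verts G" "c \<in> verts G" "x = f u" "a \<noteq> c"
      "(u, a) \<in> edges G" "(u, c) \<in> edges G" "(a, c) \<notin> edges G"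
      unfolding branching_verts_def by blast
    then show "x \<in> branching_verts (relabel f G)"
      unfolding branching_verts_def vr using edge eq by blast
  qed
qed

lemma obtain_nat_copy:
  fixes F :: "'b graph"
  assumes "wf_graph F" "connected_graph F"
  obtains G :: "nat graph" where "wf_graph G" "connected_graph G" "G \<prec> F"
    "card (branching_verts G) = card (branching_verts F)"
proof -
  obtain f :: "'b \<Rightarrow> nat" where f: "inj_on f (verts F)"
    using finite_imp_inj_to_nat_seg[of "verts F"] assms(1) unfolding wf_graph_def by blast
  have "branching_verts F \<subseteq> verts F"
    by (auto simp: branching_verts_def)
  then have "card (branching_verts (relabel f F)) = card (branching_verts F)"
    using card_image[OF inj_on_subset[OF f]] branching_verts_relabel[OF assms(1) f] by simp
  with wf_graph_relabel[OF assms(1) f] connected_graph_relabel[OF assms(2), of f]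
    relabel_induced_sub[OF assms(1) f]
  show thesis by (rule that)
qed

lemma connected_graphI:
  assumes "sym (edges G)" "h \<in> verts G" "\<forall>u\<in>verts G. (h, u) \<in> (edges G)\<^sup>*"
  shows "connected_graph G"
  unfolding connected_graph_def
proof (intro conjI ballI)
  show "verts G \<noteq> {}" using assms(2) by blast
  fix u v assume "u \<in> verts G" "v \<in> verts G"
  then have "(u, h) \<in> (edges G)\<^sup>*" "(h, v) \<in> (edges G)\<^sup>*"
    using assms(3) sym_rtrancl[OF assms(1)] unfolding sym_def by blast+
  then show "(u, v) \<in> (edges G)\<^sup>*" by (rule rtrancl_trans)
qed

lemma wf_graph_complete_star: "wf_graph (complete_star m)"
  unfolding wf_graph_def sym_def irrefl_def complete_star_def add_pendants_def complete_def by auto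

lemma wf_graph_path: "wf_graph (path m)"
  unfolding wf_graph_def sym_def irrefl_def path_def by auto

lemma wf_graph_star_subdiv: "wf_graph (star_subdiv m)"
  unfolding wf_graph_def sym_def irrefl_def star_subdiv_def add_pendants_def complete_bip_def by auto

lemma wf_graph_complete_bip_2: "wf_graph (complete_bip 2 m)"
  unfolding wf_graph_def sym_def irrefl_def complete_bip_def by auto

lemma wf_graph_join_edgeless_complete: "wf_graph (join (edgeless 2) (complete m))"
  unfolding wf_graph_def sym_def irrefl_def join_def edgeless_def complete_def by auto

lemma wf_graph_join_complete_copies: "wf_graph (join (complete 1) (copies m (path 3)))"
  unfolding wf_graph_def sym_def irrefl_def join_def complete_def copies_def path_def by auto

lemma wf_graph_CK: "wf_graph (CK m)"
proof -
  have "{(b :: bool, i). i < m} = UNIV \<times> {..<m}" by auto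
  then have "finite {(b :: bool, i). i < m}" by simp
  then show ?thesis
    unfolding wf_graph_def sym_def irrefl_def CK_def by auto
qed

lemma connected_complete_star: "0 < m \<Longrightarrow> connected_graph (complete_star m)"
proof (rule connected_graphI[of _ "Inl 0"])
  assume m: "0 < m"
  show "sym (edges (complete_star m))" using wf_graph_complete_star by (simp add: wf_graph_def)
  show "Inl 0 \<in> verts (complete_star m)" using m by (simp add: verts_complete_star)
  have hub: "(Inl 0, Inl j) \<in> (edges (complete_star m))\<^sup>*" if "j < m" for j
    using that m by (cases "j = 0") (auto simp: edges_complete_star)
  have "(Inl j, Inr j) \<in> edges (complete_star m)" if "j < m" for j
    using that by (simp add: edges_complete_star)
  then have "(Inl 0, Inr j) \<in> (edges (complete_star m))\<^sup>*" if "j < m" for j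
    using hub[OF that] that by (meson rtrancl_into_rtrancl)
  then show "\<forall>u\<in>verts (complete_star m). (Inl 0, u) \<in> (edges (complete_star m))\<^sup>*"
    using hub by (auto simp: verts_complete_star)
qed

lemma connected_path: "0 < m \<Longrightarrow> connected_graph (path m)"
proof (rule connected_graphI[of _ 0])
  show "sym (edges (path m))" using wf_graph_path by (simp add: wf_graph_def)
  show "0 < m \<Longrightarrow> 0 \<in> verts (path m)" by (simp add: verts_path)
  have "i < m \<longrightarrow> (0, i) \<in> (edges (path m))\<^sup>*" for i
  proof (induction i)
    case (Suc i)
    have "(i, Suc i) \<in> edges (path m)" if "Suc i < m" using that by (simp add: edges_path)
    with Suc show ?case by (meson Suc_lessD rtrancl_into_rtrancl)
  qed simp
  then show "\<forall>u\<in>verts (path m). (0, u) \<in> (edges (path m))\<^sup>*"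
    by (simp add: verts_path)
qed

lemma connected_star_subdiv: "connected_graph (star_subdiv m)"
proof (rule connected_graphI[of _ "Inl (Inl 0)"])
  show "sym (edges (star_subdiv m))" using wf_graph_star_subdiv by (simp add: wf_graph_def)
  show "Inl (Inl 0) \<in> verts (star_subdiv m)" by (simp add: verts_star_subdiv)
  have "(Inl (Inl 0), Inl (Inr j)) \<in> edges (star_subdiv m)"
    "(Inl (Inr j), Inr (Inr j)) \<in> edges (star_subdiv m)" if "j < m" for j
    using that by (simp_all add: edges_star_subdiv)
  then show "\<forall>u\<in>verts (star_subdiv m). (Inl (Inl 0), u) \<in> (edges (star_subdiv m))\<^sup>*"
    unfolding verts_star_subdiv by (blast intro: rtrancl_into_rtrancl r_into_rtrancl)
qed

lemma connected_complete_bip_2: "0 < m \<Longrightarrow> connected_graph (complete_bip 2 m)"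
proof (rule connected_graphI[of _ "Inr 0"])
  assume m: "0 < m"
  show "sym (edges (complete_bip 2 m))" using wf_graph_complete_bip_2 by (simp add: wf_graph_def)
  show "Inr 0 \<in> verts (complete_bip 2 m)" using m by (simp add: verts_complete_bip_2)
  have edge: "(Inr 0, Inl i) \<in> edges (complete_bip 2 m)" "(Inl 0, Inr j) \<in> edges (complete_bip 2 m)"
    if "i < 2" "j < m" for i j
    using that m by (simp_all add: edges_complete_bip_2)
  have "(Inr 0, Inr j) \<in> (edges (complete_bip 2 m))\<^sup>*" if "j < m" for j
    using edge[of 0 j] that by (meson rtrancl_into_rtrancl r_into_rtrancl zero_less_numeral)
  then show "\<forall>u\<in>verts (complete_bip 2 m). (Inr 0, u) \<in> (edges (complete_bip 2 m))\<^sup>*"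
    unfolding verts_complete_bip_2 using edge m by blast
qed

lemma connected_join_edgeless_complete: "0 < m \<Longrightarrow> connected_graph (join (edgeless 2) (complete m))"
proof (rule connected_graphI[of _ "Inl 0"])
  assume m: "0 < m"
  show "sym (edges (join (edgeless 2) (complete m)))"
    using wf_graph_join_edgeless_complete by (simp add: wf_graph_def)
  show "Inl 0 \<in> verts (join (edgeless 2) (complete m))" by (simp add: verts_join_edgeless_complete)
  have edge: "(Inl 0, Inr j) \<in> edges (join (edgeless 2) (complete m))"
    "(Inr 0, Inl i) \<in> edges (join (edgeless 2) (complete m))" if "i < 2" "j < m" for i j
    using that m by (simp_all add: edges_join_edgeless_complete)
  have "(Inl 0, Inl i) \<in> (edges (join (edgeless 2) (complete m)))\<^sup>*" if "i < 2" for i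
    using edge[of i 0] that m by (meson rtrancl_into_rtrancl r_into_rtrancl)
  moreover have "(Inl 0, Inr j) \<in> (edges (join (edgeless 2) (complete m)))\<^sup>*" if "j < m" for j
    using edge[of 0 j] that by simp
  ultimately show "\<forall>u\<in>verts (join (edgeless 2) (complete m)).
      (Inl 0, u) \<in> (edges (join (edgeless 2) (complete m)))\<^sup>*"
    unfolding verts_join_edgeless_complete by blast
qed

lemma connected_join_complete_copies: "connected_graph (join (complete 1) (copies m (path 3)))"
proof (rule connected_graphI[of _ "Inl 0"])
  show "sym (edges (join (complete 1) (copies m (path 3))))"
    using wf_graph_join_complete_copies by (simp add: wf_graph_def)
  show "Inl 0 \<in> verts (join (complete 1) (copies m (path 3)))"
    unfolding verts_join_complete_copies by simp
  show "\<forall>u\<in>verts (join (complete 1) (copies m (path 3))).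
      (Inl 0, u) \<in> (edges (join (complete 1) (copies m (path 3))))\<^sup>*"
    unfolding verts_join_complete_copies using edges_join_complete_copies(2) by blast
qed

lemma connected_CK: "0 < m \<Longrightarrow> connected_graph (CK m)"
proof (rule connected_graphI[of _ "(True, 0)"])
  assume m: "0 < m"
  show "sym (edges (CK m))" using wf_graph_CK by (simp add: wf_graph_def)
  show "(True, 0) \<in> verts (CK m)" using m by (simp add: verts_CK)
  have hub: "((True, 0), (True, j)) \<in> (edges (CK m))\<^sup>*" if "j < m" for j
    using that m by (cases "j = 0") (auto simp: edges_CK)
  moreover have "((True, j), (False, j)) \<in> edges (CK m)" if "j < m" for j
    using that by (simp add: edges_CK)
  ultimately have "((True, 0), (b, j)) \<in> (edges (CK m))\<^sup>*" if "j < m" for b j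
    using that by (cases b) (auto intro: rtrancl_into_rtrancl)
  then show "\<forall>u\<in>verts (CK m). ((True, 0), u) \<in> (edges (CK m))\<^sup>*"
    by (auto simp: verts_CK)
qed

lemma branching_vertsI:
  "v \<in> verts G \<Longrightarrow> a \<in> verts G \<Longrightarrow> c \<in> verts G \<Longrightarrow> a \<noteq> c \<Longrightarrow>
    (v, a) \<in> edges G \<Longrightarrow> (v, c) \<in> edges G \<Longrightarrow> (a, c) \<notin> edges G \<Longrightarrow> v \<in> branching_verts G"
  unfolding branching_verts_def by blast

lemma branching_verts_complete_star: "2 \<le> m \<Longrightarrow> Inl ` {..<m} \<subseteq> branching_verts (complete_star m)"
proof
  fix v :: "nat + nat" assume m: "2 \<le> m" and "v \<in> Inl ` {..<m}"
  then obtain i where i: "i < m" "v = Inl i" by blast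
  define j where "j = (if i = 0 then 1 else 0 :: nat)"
  have j: "j < m" "j \<noteq> i" using m i unfolding j_def by auto
  show "v \<in> branching_verts (complete_star m)"
    by (rule branching_vertsI[of _ _ "Inr i" "Inl j"])
      (use i j in \<open>auto simp: verts_complete_star edges_complete_star\<close>)
qed

lemma branching_verts_path: "{1..<m - 1} \<subseteq> branching_verts (path m)"
proof
  fix v assume "v \<in> {1..<m - 1}"
  then show "v \<in> branching_verts (path m)"
    by (intro branching_vertsI[of _ _ "v - 1" "v + 1"]) (auto simp: verts_path edges_path)
qed

lemma branching_verts_star_subdiv: "(\<lambda>i. Inl (Inr i)) ` {..<m} \<subseteq> branching_verts (star_subdiv m)"
proof
  fix v :: "(nat + nat) + (nat + nat)" assume "v \<in> (\<lambda>i. Inl (Inr i)) ` {..<m}"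
  then obtain i where i: "i < m" "v = Inl (Inr i)" by blast
  then show "v \<in> branching_verts (star_subdiv m)"
    by (intro branching_vertsI[of _ _ "Inl (Inl 0)" "Inr (Inr i)"])
      (auto simp: verts_star_subdiv edges_star_subdiv)
qed

lemma branching_verts_complete_bip_2: "Inr ` {..<m} \<subseteq> branching_verts (complete_bip 2 m)"
proof
  fix v :: "nat + nat" assume "v \<in> Inr ` {..<m}"
  then obtain i where i: "i < m" "v = Inr i" by blast
  then show "v \<in> branching_verts (complete_bip 2 m)"
    by (intro branching_vertsI[of _ _ "Inl 0" "Inl 1"])
      (auto simp: verts_complete_bip_2 edges_complete_bip_2)
qed

lemma branching_verts_join_edgeless_complete:
  "Inr ` {..<m} \<subseteq> branching_verts (join (edgeless 2) (complete m))"
proof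
  fix v :: "nat + nat" assume "v \<in> Inr ` {..<m}"
  then obtain i where i: "i < m" "v = Inr i" by blast
  then show "v \<in> branching_verts (join (edgeless 2) (complete m))"
    by (intro branching_vertsI[of _ _ "Inl 0" "Inl 1"])
      (auto simp: verts_join_edgeless_complete edges_join_edgeless_complete)
qed

lemma branching_verts_join_complete_copies:
  "(\<lambda>i. Inr (i, 1)) ` {..<m} \<subseteq> branching_verts (join (complete 1) (copies m (path 3)))"
proof
  fix v :: "nat + nat \<times> nat" assume "v \<in> (\<lambda>i. Inr (i, 1)) ` {..<m}"
  then obtain i where i: "i < m" "v = Inr (i, 1)" by blast
  then show "v \<in> branching_verts (join (complete 1) (copies m (path 3)))"
    by (intro branching_vertsI[of _ _ "Inr (i, 0)" "Inr (i, 2)"])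
      (auto simp: verts_join_complete_copies[unfolded One_nat_def]
        edges_join_complete_copies[unfolded One_nat_def])
qed

lemma branching_verts_CK: "2 \<le> m \<Longrightarrow> (\<lambda>i. (True, i)) ` {..<m} \<subseteq> branching_verts (CK m)"
proof
  fix v assume m: "2 \<le> m" and "v \<in> (\<lambda>i. (True, i)) ` {..<m}"
  then obtain i where i: "i < m" "v = (True, i)" by blast
  define j where "j = (if i = 0 then 1 else 0 :: nat)"
  have j: "j < m" "j \<noteq> i" using m i unfolding j_def by auto
  show "v \<in> branching_verts (CK m)"
    by (rule branching_vertsI[of _ _ "(False, i)" "(True, j)"]) (use i j in \<open>auto simp: verts_CK edges_CK\<close>)
qed

lemma card_le_branching_verts:
  assumes "wf_graph G" "inj_on g A" "g ` A \<subseteq> branching_verts G"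
  shows "card A \<le> card (branching_verts G)"
proof -
  have "finite (branching_verts G)"
    using assms(1) unfolding wf_graph_def branching_verts_def by simp
  then show ?thesis
    using card_mono[OF _ assms(3)] card_image[OF assms(2)] by simp
qed

lemma many_branching_verts:
  assumes "2 \<le> m"
  shows "m - 2 \<le> card (branching_verts (complete_star m))"
    and "m - 2 \<le> card (branching_verts (path m))"
    and "m - 2 \<le> card (branching_verts (star_subdiv m))"
    and "m - 2 \<le> card (branching_verts (complete_bip 2 m))"
    and "m - 2 \<le> card (branching_verts (join (edgeless 2) (complete m)))"
    and "m - 2 \<le> card (branching_verts (join (complete 1) (copies m (path 3))))"
    and "m - 2 \<le> card (branching_verts (CK m))"
proof -
  have "card {..<m} \<le> card (branching_verts (complete_star m))"
    by (rule card_le_branching_verts[OF wf_graph_complete_star _ branching_verts_complete_star[OF assms]])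
      simp
  then show "m - 2 \<le> card (branching_verts (complete_star m))" by simp
  have "card {1..<m - 1} \<le> card (branching_verts (path m))"
    by (rule card_le_branching_verts[OF wf_graph_path inj_on_id[of "{1..<m - 1}"]]) (use branching_verts_path in simp)
  then show "m - 2 \<le> card (branching_verts (path m))" by simp
  have "card {..<m} \<le> card (branching_verts (star_subdiv m))"
    by (rule card_le_branching_verts[OF wf_graph_star_subdiv _ branching_verts_star_subdiv])
      (simp add: inj_on_def)
  then show "m - 2 \<le> card (branching_verts (star_subdiv m))" by simp
  have "card {..<m} \<le> card (branching_verts (complete_bip 2 m))"
    by (rule card_le_branching_verts[OF wf_graph_complete_bip_2 _ branching_verts_complete_bip_2]) simp
  then show "m - 2 \<le> card (branching_verts (complete_bip 2 m))" by simp
  have "card {..<m} \<le> card (branching_verts (join (edgeless 2) (complete m)))"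
    by (rule card_le_branching_verts[OF wf_graph_join_edgeless_complete _
          branching_verts_join_edgeless_complete]) simp
  then show "m - 2 \<le> card (branching_verts (join (edgeless 2) (complete m)))" by simp
  have "card {..<m} \<le> card (branching_verts (join (complete 1) (copies m (path 3))))"
    by (rule card_le_branching_verts[OF wf_graph_join_complete_copies _
          branching_verts_join_complete_copies]) (simp add: inj_on_def)
  then show "m - 2 \<le> card (branching_verts (join (complete 1) (copies m (path 3))))" by simp
  have "card {..<m} \<le> card (branching_verts (CK m))"
    by (rule card_le_branching_verts[OF wf_graph_CK _ branching_verts_CK[OF assms]]) (simp add: inj_on_def)
  then show "m - 2 \<le> card (branching_verts (CK m))" by simp
qed

lemma forbidden_sub_if_bounded:
  fixes \<H> :: "'a graph set" and F :: "'b graph"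
  assumes bound: "\<forall>G :: nat graph. wf_graph G \<and> connected_graph G \<and> H_free \<H> G \<longrightarrow>
      card {v \<in> verts G. alpha (induced G (nbhd G v)) \<ge> 2} < c"
    and "wf_graph F" "connected_graph F" "c \<le> card (branching_verts F)"
  shows "\<exists>H\<in>\<H>. H \<prec> F"
proof (rule ccontr)
  assume free: "\<not> (\<exists>H\<in>\<H>. H \<prec> F)"
  obtain G :: "nat graph" where G: "wf_graph G" "connected_graph G" "G \<prec> F"
    "card (branching_verts G) = card (branching_verts F)"
    by (rule obtain_nat_copy[OF assms(2,3)])
  have "H_free \<H> G"
    unfolding H_free_def
  proof
    fix H assume "H \<in> \<H>"
    show "\<not> H \<prec> G"
    proof
      assume "H \<prec> G"
      then have "H \<prec> F" using G(3) by (rule induced_sub_trans)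
      with free \<open>H \<in> \<H>\<close> show False by blast
    qed
  qed
  then have "card {v \<in> verts G. alpha (induced G (nbhd G v)) \<ge> 2} < c"
    using bound G(1,2) by blast
  then have "card (branching_verts G) < c"
    using local_alpha_ge_2_eq_branching_verts[OF G(1)] by simp
  with G(4) assms(4) show False by simp
qed

lemma below_family_if_bounded:
  fixes \<H> :: "'a graph set"
  assumes bound: "\<forall>G :: nat graph. wf_graph G \<and> connected_graph G \<and> H_free \<H> G \<longrightarrow>
      card {v \<in> verts G. alpha (induced G (nbhd G v)) \<ge> 2} < c"
  shows "below_family \<H> (c + 2)"
proof -
  have m: "0 < c + 2" "2 \<le> c + 2" and c: "c = c + 2 - 2" by simp_all
  note witness = forbidden_sub_if_bounded[OF bound]
  note many = many_branching_verts[OF m(2), folded c]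
  show ?thesis
    unfolding below_family_def
    using witness[OF wf_graph_complete_star connected_complete_star[OF m(1)] many(1)]
      witness[OF wf_graph_path connected_path[OF m(1)] many(2)]
      witness[OF wf_graph_star_subdiv connected_star_subdiv many(3)]
      witness[OF wf_graph_complete_bip_2 connected_complete_bip_2[OF m(1)] many(4)]
      witness[OF wf_graph_join_edgeless_complete connected_join_edgeless_complete[OF m(1)] many(5)]
      witness[OF wf_graph_join_complete_copies connected_join_complete_copies many(6)]
      witness[OF wf_graph_CK connected_CK[OF m(1)] many(7)]
    by blast
qed

lemma not_induced_sub_if_H_free:
  assumes "H_free \<H> G" "\<exists>H\<in>\<H>. H \<prec> F"
  shows "\<not> F \<prec> G"
  using assms induced_sub_trans unfolding H_free_def by metis

lemma forbidden_free_if_below_family: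
  assumes "0 < n" "below_family \<H> n" "wf_graph G" "H_free \<H> G"
  shows "forbidden_free (verts G) (edges G) n"
proof -
  note free = not_induced_sub_if_H_free[OF assms(4)]
  have "simple_graph (verts G) (edges G)"
    using assms(3) simple_graph_iff_wf_graph by blast
  moreover have "forbidden_free_axioms (verts G) (edges G) n"
    using assms(1,2) free graph_eq_pair[of G] unfolding forbidden_free_axioms_def below_family_def
    by metis
  ultimately show ?thesis
    by (intro forbidden_free.intro)
qed

lemma bounded_if_below_family:
  fixes G :: "nat graph"
  assumes "0 < n" "below_family \<H> n" "wf_graph G" "connected_graph G" "H_free \<H> G"
  shows "card {v \<in> verts G. alpha (induced G (nbhd G v)) \<ge> 2} < branching_bound n n"
proof -
  interpret forbidden_free "verts G" "edges G" n
    using forbidden_free_if_below_family[OF assms(1-3,5)] .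
  have "connected_on (verts G)"
    using assms(4) edges_subset unfolding connected_graph_def connected_on_def
    by (simp add: Int_absorb2)
  then have "card (branching_verts (verts G, edges G)) < branching_bound n n"
    by (intro branching_verts_card_less[of _ "{}"]) (auto simp: clique_joined_def complete_on_def)
  then show ?thesis
    using local_alpha_ge_2_eq_branching_verts[OF assms(3)] graph_eq_pair[of G] by simp
qed

theorem theorem1p5:
  fixes \<H> :: "'a graph set"
  assumes "\<forall>H\<in>\<H>. wf_graph H"
  shows "(\<exists>c::nat. \<forall>G :: nat graph. wf_graph G \<and> connected_graph G \<and> H_free \<H> G \<longrightarrow>
            card {v \<in> verts G. alpha (induced G (nbhd G v)) \<ge> 2} < c)
         \<longleftrightarrow> (\<exists>n::nat. n > 0 \<and> below_family \<H> n)"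
proof
  assume "\<exists>c::nat. \<forall>G :: nat graph. wf_graph G \<and> connected_graph G \<and> H_free \<H> G \<longrightarrow>
            card {v \<in> verts G. alpha (induced G (nbhd G v)) \<ge> 2} < c"
  then obtain c where "\<forall>G :: nat graph. wf_graph G \<and> connected_graph G \<and> H_free \<H> G \<longrightarrow>
            card {v \<in> verts G. alpha (induced G (nbhd G v)) \<ge> 2} < c" ..
  then have "below_family \<H> (c + 2)"
    by (rule below_family_if_bounded)
  then show "\<exists>n::nat. n > 0 \<and> below_family \<H> n"
    by (intro exI[of _ "c + 2"]) simp
next
  assume "\<exists>n::nat. n > 0 \<and> below_family \<H> n"
  then obtain n where "0 < n" "below_family \<H> n" by blast
  then show "\<exists>c::nat. \<forall>G :: nat graph. wf_graph G \<and> connected_graph G \<and> H_free \<H> G \<longrightarrow>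
            card {v \<in> verts G. alpha (induced G (nbhd G v)) \<ge> 2} < c"
    using bounded_if_below_family by blast
qed

end
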